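(* Fix $\theta>0$. For each positive integer $m$, if $\sigma$ is drawn from the Ewens measure $\mathbb{P}_{\theta,n}$ on $\mathfrak{S}_n$, then as $n\to\infty$, \[\mathbb{E}_{\theta,n}\big(\mathsf{invol}(\sigma)\,\big|\,K(\sigma)=m\big) = \frac{n^m}{m!\,\log^{m-1} n}\left(1 + O\!\left(\frac{1}{\log n}\right)\right).\]
   Context: For $\sigma\in\mathfrak{S}_n$, $\mathsf{invol}(\sigma)$ is the number of ordered pairs $(\tau_1,\tau_2)$ of involutions in $\mathfrak{S}_n$ with $\sigma=\tau_2\circ\tau_1$, and $K(\sigma)$ is the number of cycles of $\sigma$. For $\theta>0$, the Ewens measure on $\mathfrak{S}_n$ is $\mathbb{P}_{\theta,n}(\sigma=\sigma_0)=\theta^{K(\sigma_0)}/\theta^{(n)}$ with $\theta^{(n)}=\theta(\theta+1)\cdots(\theta+n-1)$. *)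

theory Defs
  imports "HOL-Combinatorics.Permutations" "HOL-Library.Landau_Symbols" Complex_Main
begin

definition Sym :: "nat \<Rightarrow> (nat \<Rightarrow> nat) set" where
  "Sym n = {\<sigma>. \<sigma> permutes {..<n}}"

definition invol :: "nat \<Rightarrow> (nat \<Rightarrow> nat) \<Rightarrow> nat" where
  "invol n \<sigma> = card {(\<tau>1, \<tau>2). \<tau>1 \<in> Sym n \<and> \<tau>2 \<in> Sym n \<and>
       \<tau>1 \<circ> \<tau>1 = id \<and> \<tau>2 \<circ> \<tau>2 = id \<and> \<sigma> = \<tau>2 \<circ> \<tau>1}"

definition Kcyc :: "nat \<Rightarrow> (nat \<Rightarrow> nat) \<Rightarrow> nat" where
  "Kcyc n \<sigma> = card ((\<lambda>x. {(\<sigma> ^^ k) x | k. True}) ` {..<n})"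

definition ewens :: "real \<Rightarrow> nat \<Rightarrow> (nat \<Rightarrow> nat) \<Rightarrow> real" where
  "ewens \<theta> n \<sigma> = (if \<sigma> \<in> Sym n then \<theta> ^ Kcyc n \<sigma> / pochhammer \<theta> n else 0)"

definition cond_exp_invol :: "real \<Rightarrow> nat \<Rightarrow> nat \<Rightarrow> real" where
  "cond_exp_invol \<theta> n m =
     (\<Sum>\<sigma>\<in>{\<sigma>\<in>Sym n. Kcyc n \<sigma> = m}. ewens \<theta> n \<sigma> * real (invol n \<sigma>)) /
     (\<Sum>\<sigma>\<in>{\<sigma>\<in>Sym n. Kcyc n \<sigma> = m}. ewens \<theta> n \<sigma>)"

end

theory Submission
  imports Defs "HOL-Combinatorics.Orbits" "HOL-Combinatorics.Stirling" "HOL-Analysis.Harmonic_Numbers"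
begin

(* Conditioned on K = m the Ewens weight is constant, so the conditional expectation is the
   average of invol over the stirling n m permutations with m cycles.  A pair (tau1, tau2) with
   sigma = tau2 o tau1 is determined by tau1, an involution with tau1 o sigma o tau1 = inv sigma.
   Such a tau1 is fixed by the images of one base point per cycle: choosing these images inside
   the cycles gives a reflection of every cycle, so invol sigma >= prod |C|; and if some cycle is
   not mapped to itself, the images range over cycles of equal length, so
   invol sigma <= prod |C| + K^K * sum_C prod_(C' ~= C) |C'|.
   Inserting n into the cycles of a permutation of {..<n} gives recurrences: the sum of prod |C|
   over permutations with m cycles is the Lah number n!/m! * C(n-1, m-1), and the sum of the
   second term is smaller by a factor O(1/log n).  Finally stirling n m is
   (n-1)! * H(n-1)^(m-1)/(m-1)! * (1 + O(1/log n)) by induction on its recurrence, with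
   H(n-1) = log n + O(1). *)

section \<open>Cycles of a permutation\<close>

definition cycles :: "nat \<Rightarrow> (nat \<Rightarrow> nat) \<Rightarrow> nat set set" where
  "cycles n \<sigma> = orbit \<sigma> ` {..<n}"

lemma finite_cycles [simp]: "finite (cycles n \<sigma>)"
  by (simp add: cycles_def)

lemma finite_Sym [simp]: "finite (Sym n)"
  by (simp add: Sym_def finite_permutations)

lemma orbit_subset_closed:
  assumes "x \<in> A" and "\<And>y. y \<in> A \<Longrightarrow> f y \<in> A"
  shows "orbit f x \<subseteq> A"
proof
  fix y assume "y \<in> orbit f x"
  then show "y \<in> A" by induction (use assms in auto)
qed

lemma transpose_mem: "a \<in> A \<Longrightarrow> b \<in> A \<Longrightarrow> x \<in> A \<Longrightarrow> Transposition.transpose a b x \<in> A"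
  by (simp add: Transposition.transpose_def)

lemma orbit_eq_if_mem: "permutation f \<Longrightarrow> y \<in> orbit f x \<Longrightarrow> orbit f y = orbit f x"
  by (rule orbit_cyclic_eq3[OF cyclic_on_orbit'])

lemma permutes_lessThan_permutation: "\<sigma> permutes {..<n::nat} \<Longrightarrow> permutation \<sigma>"
  by (rule permutes_imp_permutation[OF finite_lessThan])

context
  fixes n :: nat and \<sigma> :: "nat \<Rightarrow> nat"
  assumes \<sigma>: "\<sigma> permutes {..<n}"
begin

lemma orbit_funpow_altdef: "orbit \<sigma> x = {(\<sigma> ^^ k) x | k. True}"
  by (rule orbit_altdef_permutation[OF permutes_lessThan_permutation[OF \<sigma>]])

lemma Kcyc_eq_card_cycles: "Kcyc n \<sigma> = card (cycles n \<sigma>)"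
  by (simp add: Kcyc_def cycles_def orbit_funpow_altdef)

lemma self_in_orbit [simp]: "x \<in> orbit \<sigma> x"
  by (rule permutation_self_in_orbit[OF permutes_lessThan_permutation[OF \<sigma>]])

lemma orbit_eq_of_mem: "y \<in> orbit \<sigma> x \<Longrightarrow> orbit \<sigma> y = orbit \<sigma> x"
  by (rule orbit_eq_if_mem[OF permutes_lessThan_permutation[OF \<sigma>]])

lemma orbit_in_cycles: "x < n \<Longrightarrow> orbit \<sigma> x \<in> cycles n \<sigma>"
  by (simp add: cycles_def)

lemma cycle_subset: "C \<in> cycles n \<sigma> \<Longrightarrow> C \<subseteq> {..<n}"
  using permutes_orbit_subset[OF \<sigma>] by (auto simp: cycles_def)

lemma finite_cycle: "C \<in> cycles n \<sigma> \<Longrightarrow> finite C"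
  using cycle_subset finite_subset by blast

lemma cycle_nonempty: "C \<in> cycles n \<sigma> \<Longrightarrow> C \<noteq> {}"
  by (auto simp: cycles_def orbit_nonempty)

lemma cycle_eq_orbit: "C \<in> cycles n \<sigma> \<Longrightarrow> x \<in> C \<Longrightarrow> orbit \<sigma> x = C"
  using orbit_eq_of_mem by (auto simp: cycles_def)

lemma Min_cycle: "C \<in> cycles n \<sigma> \<Longrightarrow> Min C \<in> C"
  using finite_cycle cycle_nonempty by (rule Min_in)

lemma funpow_in_cycle: "C \<in> cycles n \<sigma> \<Longrightarrow> z \<in> C \<Longrightarrow> (\<sigma> ^^ k) z \<in> C"
  using funpow_in_orbit[OF self_in_orbit[of z], of k] cycle_eq_orbit by simp

lemma inv_in_cycle: "C \<in> cycles n \<sigma> \<Longrightarrow> z \<in> C \<Longrightarrow> inv \<sigma> z \<in> C"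
  using orbit.base[of "inv \<sigma>" z] cycle_eq_orbit
  by (simp add: orbit_inv_eq[OF permutes_lessThan_permutation[OF \<sigma>]])

lemma sum_over_points_eq_sum_over_cycles:
  "(\<Sum>x<n. g (orbit \<sigma> x)) = (\<Sum>C\<in>cycles n \<sigma>. of_nat (card C) * g C)"
proof -
  have fiber: "{x. x < n \<and> orbit \<sigma> x = C} = C" if C: "C \<in> cycles n \<sigma>" for C
    using cycle_eq_orbit[OF C] cycle_subset[OF C] self_in_orbit by blast
  have "(\<Sum>x<n. g (orbit \<sigma> x)) =
        (\<Sum>C\<in>cycles n \<sigma>. \<Sum>x\<in>{x\<in>{..<n}. orbit \<sigma> x = C}. g (orbit \<sigma> x))"
    unfolding cycles_def using sum.image_gen[of "{..<n}" "\<lambda>x. g (orbit \<sigma> x)" "orbit \<sigma>"] by simp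
  also have "\<dots> = (\<Sum>C\<in>cycles n \<sigma>. \<Sum>x\<in>C. g C)"
    by (rule sum.cong[OF refl], rule sum.cong) (simp_all add: fiber cycle_eq_orbit)
  also have "\<dots> = (\<Sum>C\<in>cycles n \<sigma>. of_nat (card C) * g C)"
    by simp
  finally show ?thesis .
qed

lemma sum_card_cycles: "(\<Sum>C\<in>cycles n \<sigma>. card C) = n"
  using sum_over_points_eq_sum_over_cycles[of "\<lambda>_. 1::nat"] by simp

lemma n_notin_cycle: "C \<in> cycles n \<sigma> \<Longrightarrow> n \<notin> C"
  using cycle_subset by blast

lemma cycles_Suc_fixed: "cycles (Suc n) \<sigma> = insert {n} (cycles n \<sigma>)"
proof -
  have "orbit \<sigma> n = {n}"
    using permutes_not_in[OF \<sigma>] by (simp add: orbit_eq_singleton_iff)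
  then show ?thesis by (simp add: cycles_def lessThan_Suc)
qed

context
  fixes j :: nat
  assumes j: "j < n"
begin

private abbreviation "\<sigma>' \<equiv> Transposition.transpose n j \<circ> \<sigma>"

lemma permutes_transpose_comp: "\<sigma>' permutes {..<Suc n}"
  by (rule permutes_compose[OF permutes_subset[OF \<sigma>]]) (use j in \<open>auto intro!: permutes_swap_id\<close>)

lemma permutation_transpose_comp: "permutation \<sigma>'"
  using permutes_transpose_comp by (auto simp: permutation_permutes)

lemma orbit_transpose_comp_self: "orbit \<sigma>' j = insert n (orbit \<sigma> j)"
proof (intro equalityI)
  show "orbit \<sigma>' j \<subseteq> insert n (orbit \<sigma> j)"
  proof (rule orbit_subset_closed)
    fix y assume "y \<in> insert n (orbit \<sigma> j)"
    then have "\<sigma> y \<in> insert n (orbit \<sigma> j)"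
      using permutes_not_in[OF \<sigma>, of n] orbit.step[of y \<sigma> j] by auto
    then show "\<sigma>' y \<in> insert n (orbit \<sigma> j)"
      using transpose_mem[of n "insert n (orbit \<sigma> j)" j "\<sigma> y"] by simp
  qed simp
  have "\<sigma>' n = j"
    using permutes_not_in[OF \<sigma>, of n] by simp
  then have "j \<in> orbit \<sigma>' n"
    using orbit.base[of \<sigma>' n] by simp
  then have n_in: "n \<in> orbit \<sigma>' j"
    using orbit_eq_if_mem[OF permutation_transpose_comp]
      permutation_self_in_orbit[OF permutation_transpose_comp] by blast
  have j_in: "j \<in> orbit \<sigma>' j"
    by (rule permutation_self_in_orbit[OF permutation_transpose_comp])
  have "orbit \<sigma> j \<subseteq> orbit \<sigma>' j"
  proof (rule orbit_subset_closed[OF j_in])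
    fix y assume "y \<in> orbit \<sigma>' j"
    then have "\<sigma>' y \<in> orbit \<sigma>' j" by (rule orbit.step)
    then have "Transposition.transpose n j (\<sigma>' y) \<in> orbit \<sigma>' j"
      using transpose_mem[OF n_in j_in] by blast
    then show "\<sigma> y \<in> orbit \<sigma>' j" by simp
  qed
  with n_in show "insert n (orbit \<sigma> j) \<subseteq> orbit \<sigma>' j" by blast
qed

lemma orbit_transpose_comp_other:
  assumes x: "x < n" "x \<notin> orbit \<sigma> j"
  shows "orbit \<sigma>' x = orbit \<sigma> x"
proof (rule orbit_cong)
  show "x \<in> orbit \<sigma> x" by simp
  fix y assume y: "y \<in> orbit \<sigma> x"
  then have \<sigma>y: "\<sigma> y \<in> orbit \<sigma> x" by (rule orbit.step)
  have "\<sigma> y \<notin> orbit \<sigma> j"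
    using orbit_eq_of_mem[of "\<sigma> y" x] orbit_eq_of_mem[of "\<sigma> y" j] \<sigma>y x(2) self_in_orbit by metis
  moreover have "\<sigma> y < n"
    using \<sigma>y permutes_orbit_subset[OF \<sigma>, of x] x(1) by auto
  ultimately show "\<sigma>' y = \<sigma> y"
    by (auto simp: Transposition.transpose_def)
qed

lemma cycles_Suc_transpose:
  "cycles (Suc n) \<sigma>' = insert (insert n (orbit \<sigma> j)) (cycles n \<sigma> - {orbit \<sigma> j})"
proof -
  have split: "{..<Suc n} = insert n (orbit \<sigma> j) \<union> ({..<n} - orbit \<sigma> j)"
    using cycle_subset[OF orbit_in_cycles[OF j]] by auto
  have "cycles (Suc n) \<sigma>' = orbit \<sigma>' ` insert n (orbit \<sigma> j) \<union> orbit \<sigma>' ` ({..<n} - orbit \<sigma> j)"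
    unfolding cycles_def split by (rule image_Un)
  also have "orbit \<sigma>' ` insert n (orbit \<sigma> j) = {insert n (orbit \<sigma> j)}"
    using orbit_eq_if_mem[OF permutation_transpose_comp] orbit_transpose_comp_self by auto
  also have "orbit \<sigma>' ` ({..<n} - orbit \<sigma> j) = orbit \<sigma> ` ({..<n} - orbit \<sigma> j)"
    using orbit_transpose_comp_other by (intro image_cong) auto
  also have "orbit \<sigma> ` ({..<n} - orbit \<sigma> j) = cycles n \<sigma> - {orbit \<sigma> j}"
  proof (rule set_eqI)
    fix C
    show "C \<in> orbit \<sigma> ` ({..<n} - orbit \<sigma> j) \<longleftrightarrow> C \<in> cycles n \<sigma> - {orbit \<sigma> j}"
      using orbit_eq_of_mem self_in_orbit unfolding cycles_def by blast
  qed
  finally show ?thesis by (simp only: Un_insert_left Un_empty_left)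
qed

end

end

lemma Kcyc_Suc_fixed:
  assumes "\<sigma> permutes {..<n}"
  shows "Kcyc (Suc n) \<sigma> = Suc (Kcyc n \<sigma>)"
proof -
  have "\<sigma> permutes {..<Suc n}" using assms by (rule permutes_subset) auto
  moreover have "{n} \<notin> cycles n \<sigma>" using n_notin_cycle[OF assms] by blast
  ultimately show ?thesis
    by (simp add: Kcyc_eq_card_cycles assms cycles_Suc_fixed)
qed

lemma Kcyc_Suc_transpose:
  assumes "\<sigma> permutes {..<n}" and "j < n"
  shows "Kcyc (Suc n) (Transposition.transpose n j \<circ> \<sigma>) = Kcyc n \<sigma>"
proof -
  let ?C = "orbit \<sigma> j"
  have "insert n ?C \<notin> cycles n \<sigma> - {?C}" using n_notin_cycle[OF assms(1)] by blast
  then have "card (insert (insert n ?C) (cycles n \<sigma> - {?C})) = Suc (card (cycles n \<sigma> - {?C}))"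
    by simp
  also have "\<dots> = card (cycles n \<sigma>)"
    using card_Suc_Diff1[OF finite_cycles orbit_in_cycles[OF assms]] .
  finally show ?thesis
    using Kcyc_eq_card_cycles[OF permutes_transpose_comp[OF assms]]
    by (simp add: Kcyc_eq_card_cycles[OF assms(1)] cycles_Suc_transpose[OF assms])
qed

lemma sum_Sym_Suc:
  "(\<Sum>\<sigma>\<in>Sym (Suc n). f \<sigma>) =
     (\<Sum>\<sigma>\<in>Sym n. f \<sigma> + (\<Sum>j<n. f (Transposition.transpose n j \<circ> \<sigma>)))"
proof -
  have "(\<Sum>\<sigma>\<in>Sym (Suc n). f \<sigma>) = (\<Sum>\<sigma>\<in>{p. p permutes insert n {..<n}}. f \<sigma>)"
    by (simp add: Sym_def lessThan_Suc)
  also have "\<dots> = (\<Sum>j\<in>insert n {..<n}. \<Sum>\<sigma>\<in>Sym n. f (Transposition.transpose n j \<circ> \<sigma>))"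
    unfolding Sym_def by (rule sum_over_permutations_insert) auto
  also have "\<dots> = (\<Sum>\<sigma>\<in>Sym n. f \<sigma>) + (\<Sum>j<n. \<Sum>\<sigma>\<in>Sym n. f (Transposition.transpose n j \<circ> \<sigma>))"
    by simp
  finally show ?thesis
    by (simp add: sum.distrib sum.swap[of _ "{..<n}"])
qed

section \<open>Sums over the permutations with a given number of cycles\<close>

definition cycles_sum :: "(nat set set \<Rightarrow> real) \<Rightarrow> nat \<Rightarrow> nat \<Rightarrow> real" where
  "cycles_sum F n m = (\<Sum>\<sigma>\<in>{\<sigma>\<in>Sym n. Kcyc n \<sigma> = m}. F (cycles n \<sigma>))"

lemma cycles_sum_cmult: "cycles_sum (\<lambda>R. c * F R) n m = c * cycles_sum F n m"
  by (simp add: cycles_sum_def sum_distrib_left)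

lemma cycles_sum_add: "cycles_sum (\<lambda>R. F R + G R) n m = cycles_sum F n m + cycles_sum G n m"
  by (simp add: cycles_sum_def sum.distrib)

lemma cycles_sum_altdef:
  "cycles_sum F n m = (\<Sum>\<sigma>\<in>Sym n. if Kcyc n \<sigma> = m then F (cycles n \<sigma>) else 0)"
  unfolding cycles_sum_def by (rule sum.inter_filter) simp

lemma cycles_sum_0: "cycles_sum F 0 m = (if m = 0 then F {} else 0)"
proof -
  have "Sym 0 = {id}" by (auto simp: Sym_def)
  then show ?thesis by (simp add: cycles_sum_altdef Kcyc_def cycles_def)
qed

lemma cycles_sum_Suc_0: "cycles_sum F (Suc n) 0 = 0"
proof -
  have empty: "{\<sigma>\<in>Sym (Suc n). Kcyc (Suc n) \<sigma> = 0} = {}"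
    by (auto simp: Sym_def Kcyc_eq_card_cycles cycles_def card_gt_0_iff)
  show ?thesis unfolding cycles_sum_def empty by simp
qed

text \<open>A permutation of \<open>{..<Suc n}\<close> arises from one of \<open>{..<n}\<close> either by adding \<open>n\<close> as a
  fixed point or by inserting \<open>n\<close> into a cycle \<open>C\<close>, right after one of its \<open>card C\<close> points.\<close>

lemma cycles_sum_Suc_Suc:
  fixes F G H :: "nat set set \<Rightarrow> real"
  assumes fixed: "\<And>\<sigma>. \<sigma> permutes {..<n} \<Longrightarrow> Kcyc n \<sigma> = m \<Longrightarrow>
                     F (insert {n} (cycles n \<sigma>)) = G (cycles n \<sigma>)"
    and inserted: "\<And>\<sigma>. \<sigma> permutes {..<n} \<Longrightarrow> Kcyc n \<sigma> = Suc m \<Longrightarrow>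
            (\<Sum>C\<in>cycles n \<sigma>. real (card C) * F (insert (insert n C) (cycles n \<sigma> - {C}))) = H (cycles n \<sigma>)"
  shows "cycles_sum F (Suc n) (Suc m) = cycles_sum G n m + cycles_sum H n (Suc m)"
proof -
  have "(if Kcyc (Suc n) \<sigma> = Suc m then F (cycles (Suc n) \<sigma>) else 0) +
        (\<Sum>j<n. if Kcyc (Suc n) (Transposition.transpose n j \<circ> \<sigma>) = Suc m
                then F (cycles (Suc n) (Transposition.transpose n j \<circ> \<sigma>)) else 0) =
        (if Kcyc n \<sigma> = m then G (cycles n \<sigma>) else 0) +
        (if Kcyc n \<sigma> = Suc m then H (cycles n \<sigma>) else 0)"
    if "\<sigma> \<in> Sym n" for \<sigma>
  proof -
    have \<sigma>: "\<sigma> permutes {..<n}" using that by (simp add: Sym_def)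
    have "(\<Sum>j<n. if Kcyc (Suc n) (Transposition.transpose n j \<circ> \<sigma>) = Suc m
                then F (cycles (Suc n) (Transposition.transpose n j \<circ> \<sigma>)) else 0) =
          (\<Sum>j<n. if Kcyc n \<sigma> = Suc m
                then F (insert (insert n (orbit \<sigma> j)) (cycles n \<sigma> - {orbit \<sigma> j})) else 0)"
      by (intro sum.cong refl) (simp add: Kcyc_Suc_transpose[OF \<sigma>] cycles_Suc_transpose[OF \<sigma>])
    also have "\<dots> = (if Kcyc n \<sigma> = Suc m then H (cycles n \<sigma>) else 0)"
      using sum_over_points_eq_sum_over_cycles[OF \<sigma>,
          of "\<lambda>C. F (insert (insert n C) (cycles n \<sigma> - {C}))"] inserted[OF \<sigma>]
      by simp
    finally show ?thesis
      using fixed[OF \<sigma>] by (simp add: Kcyc_Suc_fixed[OF \<sigma>] cycles_Suc_fixed[OF \<sigma>])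
  qed
  then show ?thesis
    unfolding cycles_sum_altdef sum_Sym_Suc by (simp add: sum.distrib)
qed

lemma card_Kcyc_eq_stirling: "card {\<sigma>\<in>Sym n. Kcyc n \<sigma> = m} = stirling n m"
proof -
  have "cycles_sum (\<lambda>_. 1) n m = stirling n m"
  proof (induction n arbitrary: m)
    case 0
    then show ?case by (simp add: cycles_sum_0)
  next
    case (Suc n)
    show ?case
    proof (cases m)
      case 0
      then show ?thesis by (simp add: cycles_sum_Suc_0)
    next
      case (Suc k)
      have "cycles_sum (\<lambda>_. 1) (Suc n) (Suc k) = cycles_sum (\<lambda>_. 1) n k + cycles_sum (\<lambda>_. real n) n (Suc k)"
        by (rule cycles_sum_Suc_Suc) (simp_all flip: of_nat_sum add: sum_card_cycles)
      then show ?thesis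
        using Suc.IH by (simp add: Suc cycles_sum_def flip: sum_distrib_left)
    qed
  qed
  then show ?thesis by (simp add: cycles_sum_def)
qed

lemma cycles_sum_nonneg: "(\<And>R. F R \<ge> 0) \<Longrightarrow> cycles_sum F n m \<ge> 0"
  by (simp add: cycles_sum_def sum_nonneg)

definition prod_card :: "nat set set \<Rightarrow> real" where
  "prod_card R = (\<Prod>C\<in>R. real (card C))"

definition sum_prod_card_but_one :: "nat set set \<Rightarrow> real" where
  "sum_prod_card_but_one R = (\<Sum>C\<in>R. prod_card (R - {C}))"

lemma prod_card_empty [simp]: "prod_card {} = 1"
  by (simp add: prod_card_def)

lemma sum_prod_card_but_one_empty [simp]: "sum_prod_card_but_one {} = 0"
  by (simp add: sum_prod_card_but_one_def)

lemma prod_card_nonneg: "prod_card R \<ge> 0"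
  by (simp add: prod_card_def prod_nonneg)

lemma prod_card_insert:
  "finite R \<Longrightarrow> C \<notin> R \<Longrightarrow> prod_card (insert C R) = real (card C) * prod_card R"
  by (simp add: prod_card_def)

lemma prod_card_remove:
  "finite R \<Longrightarrow> C \<in> R \<Longrightarrow> prod_card R = real (card C) * prod_card (R - {C})"
  using prod_card_insert[of "R - {C}" C] by (simp add: insert_absorb)

lemma sum_prod_card_but_one_insert:
  assumes "finite R" "C \<notin> R"
  shows "sum_prod_card_but_one (insert C R) = prod_card R + real (card C) * sum_prod_card_but_one R"
proof -
  have "prod_card (insert C R - {C'}) = real (card C) * prod_card (R - {C'})" if "C' \<in> R" for C'
  proof -
    have "insert C R - {C'} = insert C (R - {C'})" using assms that by auto
    then show ?thesis using assms prod_card_insert[of "R - {C'}" C] by simp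
  qed
  then show ?thesis
    using assms by (simp add: sum_prod_card_but_one_def sum_distrib_left)
qed

lemma sum_prod_card_but_one_remove:
  "finite R \<Longrightarrow> C \<in> R \<Longrightarrow>
   sum_prod_card_but_one R = prod_card (R - {C}) + real (card C) * sum_prod_card_but_one (R - {C})"
  using sum_prod_card_but_one_insert[of "R - {C}" C] by (simp add: insert_absorb)

lemma sum_Suc_card_cycles:
  assumes "\<sigma> permutes {..<n}"
  shows "(\<Sum>C\<in>cycles n \<sigma>. real (card C) + 1) = real (n + Kcyc n \<sigma>)"
  using sum_card_cycles[OF assms] by (simp add: sum.distrib Kcyc_eq_card_cycles[OF assms] flip: of_nat_sum)

lemma cycles_sum_prod_card_Suc_Suc:
  "cycles_sum prod_card (Suc n) (Suc m) =
     cycles_sum prod_card n m + real (n + Suc m) * cycles_sum prod_card n (Suc m)"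
proof -
  have "cycles_sum prod_card (Suc n) (Suc m) =
        cycles_sum prod_card n m + cycles_sum (\<lambda>R. real (n + Suc m) * prod_card R) n (Suc m)"
  proof (rule cycles_sum_Suc_Suc)
    fix \<sigma> assume \<sigma>: "\<sigma> permutes {..<n}"
    show "prod_card (insert {n} (cycles n \<sigma>)) = prod_card (cycles n \<sigma>)"
      using prod_card_insert[OF finite_cycles, of "{n}" n \<sigma>] n_notin_cycle[OF \<sigma>] by auto
  next
    fix \<sigma> assume \<sigma>: "\<sigma> permutes {..<n}" and K: "Kcyc n \<sigma> = Suc m"
    let ?R = "cycles n \<sigma>"
    have "real (card C) * prod_card (insert (insert n C) (?R - {C})) = (real (card C) + 1) * prod_card ?R"
      if C: "C \<in> ?R" for C
    proof -
      have "insert n C \<notin> ?R - {C}" "card (insert n C) = card C + 1"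
        using n_notin_cycle[OF \<sigma>] finite_cycle[OF \<sigma> C] C by auto
      then have "prod_card (insert (insert n C) (?R - {C})) = (real (card C) + 1) * prod_card (?R - {C})"
        using prod_card_insert[of "?R - {C}" "insert n C"] by simp
      then show ?thesis
        using prod_card_remove[OF finite_cycles C] by simp
    qed
    then have "(\<Sum>C\<in>?R. real (card C) * prod_card (insert (insert n C) (?R - {C}))) =
               (\<Sum>C\<in>?R. real (card C) + 1) * prod_card ?R"
      by (simp add: sum_distrib_right)
    then show "(\<Sum>C\<in>?R. real (card C) * prod_card (insert (insert n C) (?R - {C}))) =
               real (n + Suc m) * prod_card ?R"
      using sum_Suc_card_cycles[OF \<sigma>] K by simp
  qed
  then show ?thesis by (simp add: cycles_sum_cmult)
qed

lemma cycles_sum_but_one_Suc_Suc: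
  "cycles_sum sum_prod_card_but_one (Suc n) (Suc m) =
     cycles_sum sum_prod_card_but_one n m + cycles_sum prod_card n m +
     real (n + m) * cycles_sum sum_prod_card_but_one n (Suc m)"
proof -
  have "cycles_sum sum_prod_card_but_one (Suc n) (Suc m) =
        cycles_sum (\<lambda>R. sum_prod_card_but_one R + prod_card R) n m +
        cycles_sum (\<lambda>R. real (n + m) * sum_prod_card_but_one R) n (Suc m)"
  proof (rule cycles_sum_Suc_Suc)
    fix \<sigma> assume \<sigma>: "\<sigma> permutes {..<n}"
    show "sum_prod_card_but_one (insert {n} (cycles n \<sigma>)) =
          sum_prod_card_but_one (cycles n \<sigma>) + prod_card (cycles n \<sigma>)"
      using sum_prod_card_but_one_insert[OF finite_cycles, of "{n}" n \<sigma>] n_notin_cycle[OF \<sigma>, of "{n}"]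
      by (auto simp: add.commute)
  next
    fix \<sigma> assume \<sigma>: "\<sigma> permutes {..<n}" and K: "Kcyc n \<sigma> = Suc m"
    let ?R = "cycles n \<sigma>"
    have "real (card C) * sum_prod_card_but_one (insert (insert n C) (?R - {C})) =
          (real (card C) + 1) * sum_prod_card_but_one ?R - prod_card (?R - {C})"
      if C: "C \<in> ?R" for C
    proof -
      have "insert n C \<notin> ?R - {C}" "card (insert n C) = card C + 1"
        using n_notin_cycle[OF \<sigma>] finite_cycle[OF \<sigma> C] C by auto
      then have "sum_prod_card_but_one (insert (insert n C) (?R - {C})) =
            prod_card (?R - {C}) + (real (card C) + 1) * sum_prod_card_but_one (?R - {C})"
        using sum_prod_card_but_one_insert[of "?R - {C}" "insert n C"] by simp
      then show ?thesis
        using sum_prod_card_but_one_remove[OF finite_cycles C] by (simp add: algebra_simps)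
    qed
    then have "(\<Sum>C\<in>?R. real (card C) * sum_prod_card_but_one (insert (insert n C) (?R - {C}))) =
          (\<Sum>C\<in>?R. real (card C) + 1) * sum_prod_card_but_one ?R - sum_prod_card_but_one ?R"
      by (simp add: sum_subtractf sum_distrib_right sum_prod_card_but_one_def)
    then show "(\<Sum>C\<in>?R. real (card C) * sum_prod_card_but_one (insert (insert n C) (?R - {C}))) =
               real (n + m) * sum_prod_card_but_one ?R"
      using sum_Suc_card_cycles[OF \<sigma>] K by (simp add: algebra_simps)
  qed
  then show ?thesis by (simp add: cycles_sum_cmult cycles_sum_add)
qed

lemma Suc_times_choose_Suc: "Suc k * (a choose Suc k) = (a - k) * (a choose k)"
  using binomial_absorption[of k a] binomial_absorb_comp[of a k] by simp

text \<open>\<open>cycles_sum prod_card n m\<close> counts permutations with \<open>m\<close> cycles and a marked point on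
  each cycle, i.e.\ the Lah numbers.\<close>

lemma cycles_sum_prod_card_eq:
  assumes "n \<ge> 1" "m \<ge> 1"
  shows "fact m * cycles_sum prod_card n m = fact n * real ((n - 1) choose (m - 1))"
  using assms
proof (induction n arbitrary: m rule: nat_induct_at_least)
  case base
  then obtain k where m: "m = Suc k" by (cases m) auto
  show ?case
    unfolding m One_nat_def cycles_sum_prod_card_Suc_Suc by (cases k) (simp_all add: cycles_sum_0)
next
  case (Suc n)
  then obtain k where m: "m = Suc k" by (cases m) auto
  have D_n_0: "cycles_sum prod_card n 0 = 0"
    using \<open>n \<ge> 1\<close> by (cases n) (simp_all add: cycles_sum_Suc_0)
  have IH_Suc: "fact (Suc k) * cycles_sum prod_card n (Suc k) = fact n * real ((n - 1) choose k)"
    using Suc.IH[of "Suc k"] by simp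
  show ?case
  proof (cases k)
    case 0
    then show ?thesis
      using IH_Suc by (simp add: m cycles_sum_prod_card_Suc_Suc D_n_0 algebra_simps)
  next
    case (Suc k')
    have IH: "fact k * cycles_sum prod_card n k = fact n * real ((n - 1) choose (k - 1))"
      using Suc.IH[of k] Suc by simp
    have absorb: "real k * real ((n - 1) choose k) = (real n - real k) * real ((n - 1) choose (k - 1))"
    proof (cases "k \<le> n")
      case True
      have "k * ((n - 1) choose k) = (n - k) * ((n - 1) choose (k - 1))"
        using Suc_times_choose_Suc[of "k - 1" "n - 1"] Suc \<open>n \<ge> 1\<close> by simp
      then have "real (k * ((n - 1) choose k)) = real ((n - k) * ((n - 1) choose (k - 1)))"
        by (rule arg_cong)
      then show ?thesis
        using True by (simp add: of_nat_diff)
    next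
      case False
      then show ?thesis using Suc \<open>n \<ge> 1\<close> by (simp add: binomial_eq_0)
    qed
    have pascal: "n choose k = ((n - 1) choose k) + ((n - 1) choose (k - 1))"
      using \<open>n \<ge> 1\<close> Suc by (cases n) simp_all
    have "fact (Suc k) * cycles_sum prod_card (Suc n) (Suc k) =
          real (Suc k) * (fact k * cycles_sum prod_card n k) +
          real (n + Suc k) * (fact (Suc k) * cycles_sum prod_card n (Suc k))"
      by (simp add: cycles_sum_prod_card_Suc_Suc algebra_simps)
    also have "\<dots> = fact n * (real (Suc k) * real ((n - 1) choose (k - 1)) +
                               real (n + Suc k) * real ((n - 1) choose k))"
      unfolding IH IH_Suc by (simp add: algebra_simps)
    also have "real (Suc k) * real ((n - 1) choose (k - 1)) + real (n + Suc k) * real ((n - 1) choose k) =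
               real (Suc n) * real (n choose k)"
      using absorb by (simp add: pascal algebra_simps)
    finally show ?thesis by (simp add: m algebra_simps)
  qed
qed

lemma cycles_sum_prod_card_pos:
  assumes "1 \<le> m" "m \<le> n"
  shows "cycles_sum prod_card n m > 0"
proof -
  have "fact m * cycles_sum prod_card n m > 0"
    using cycles_sum_prod_card_eq[of n m] assms by simp
  then show ?thesis by (simp add: zero_less_mult_iff)
qed

lemma cycles_sum_prod_card_le:
  assumes "n \<ge> 1" "m \<ge> 1"
  shows "cycles_sum prod_card n m \<le> fact n * real n ^ (m - 1)"
proof -
  have "real ((n - 1) choose (m - 1)) \<le> real n ^ (m - 1)"
  proof -
    have "(n - 1) choose (m - 1) \<le> (n - 1) ^ (m - 1)"
      using binomial_fact_pow[of "n - 1" "m - 1"] by (metis dual_order.trans fact_ge_1 mult_le_mono2 mult_1_right)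
    also have "\<dots> \<le> n ^ (m - 1)" by (intro power_mono) auto
    finally show ?thesis by (metis of_nat_le_iff of_nat_power)
  qed
  then have "fact m * cycles_sum prod_card n m \<le> fact n * real n ^ (m - 1)"
    using cycles_sum_prod_card_eq[OF assms] by (simp add: mult_left_mono)
  moreover have "1 * cycles_sum prod_card n m \<le> fact m * cycles_sum prod_card n m"
    by (rule mult_right_mono) (simp_all add: cycles_sum_nonneg prod_card_nonneg)
  ultimately show ?thesis by simp
qed

lemma cycles_sum_but_one_1: "n \<ge> 1 \<Longrightarrow> cycles_sum sum_prod_card_but_one n 1 = fact (n - 1)"
proof (induction n rule: nat_induct_at_least)
  case base
  then show ?case
    using cycles_sum_but_one_Suc_Suc[of 0 0] by (simp add: cycles_sum_0)
next
  case (Suc n)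
  then obtain n' where "n = Suc n'" by (cases n) auto
  then show ?case
    using cycles_sum_but_one_Suc_Suc[of n 0] Suc.IH by (simp add: cycles_sum_Suc_0)
qed

lemma harm_le: "harm n \<le> (real n :: real)"
proof (induction n)
  case (Suc n)
  have "inverse (real (Suc n)) \<le> (1::real)" by (simp add: inverse_le_1_iff)
  then show ?case using Suc by (simp add: harm_Suc)
qed (simp add: harm_def)

lemma add_mult_power_le: "(a::real) \<ge> 0 \<Longrightarrow> (a + real j) * a ^ j \<le> a * (a + 1) ^ j"
proof (induction j)
  case (Suc j)
  have "(a + real (Suc j)) * a ^ Suc j = a ^ j * (a * (a + real j + 1))" by (simp add: algebra_simps)
  also have "\<dots> \<le> a ^ j * ((a + 1) * (a + real j))"
    using Suc.prems by (intro mult_left_mono) (auto simp: algebra_simps)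
  also have "\<dots> = (a + 1) * ((a + real j) * a ^ j)" by (simp add: algebra_simps)
  also have "\<dots> \<le> (a + 1) * (a * (a + 1) ^ j)" using Suc by (intro mult_left_mono) auto
  finally show ?case by (simp add: algebra_simps)
qed simp

lemma cycles_sum_but_one_le_step:
  assumes m: "m \<ge> 2"
    and prev: "\<And>n. cycles_sum sum_prod_card_but_one n (m - 1) + cycles_sum prod_card n (m - 1)
                     \<le> real m * fact n * real (n + 1) ^ (m - 2)"
  shows "cycles_sum sum_prod_card_but_one n m \<le> real m * fact n * real (n + 1) ^ (m - 2) * (1 + harm n)"
proof (induction n)
  case 0
  then show ?case by (simp add: cycles_sum_0 harm_def)
next
  case (Suc n)
  obtain k where k: "m = Suc k" using m by (cases m) auto
  let ?c = "real m * fact n" and ?H = "harm n :: real"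
  let ?p = "real (n + 1) ^ (m - 2)" and ?q = "real (n + 2) ^ (m - 2)"
  have H0: "?H \<ge> 0" by (rule harm_nonneg)
  have pq: "?p \<le> ?q" by (intro power_mono) auto
  have shift: "real (n + k) * ?p \<le> real (n + 1) * ?q"
    using add_mult_power_le[of "real (n + 1)" "m - 2"] m k by (simp add: add_ac)
  have "cycles_sum sum_prod_card_but_one (Suc n) m =
        (cycles_sum sum_prod_card_but_one n k + cycles_sum prod_card n k) +
        real (n + k) * cycles_sum sum_prod_card_but_one n m"
    unfolding k cycles_sum_but_one_Suc_Suc by simp
  also have "\<dots> \<le> ?c * ?p + real (n + k) * (?c * ?p * (1 + ?H))"
    using prev[of n] Suc.IH k by (intro add_mono mult_left_mono) (auto simp: mult.assoc)
  also have "\<dots> = ?c * ?p + ?c * (real (n + k) * ?p) * (1 + ?H)" by (simp add: algebra_simps)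
  also have "\<dots> \<le> ?c * ?q + ?c * (real (n + 1) * ?q) * (1 + ?H)"
    using pq shift H0 by (intro add_mono mult_left_mono mult_right_mono) auto
  also have "\<dots> = real m * fact (Suc n) * ?q * (1 + harm (Suc n))"
    by (simp add: harm_Suc field_simps)
  finally show ?case by (simp add: add.commute)
qed

lemma cycles_sum_1_add_le: "cycles_sum sum_prod_card_but_one n 1 + cycles_sum prod_card n 1 \<le> 2 * fact n"
proof (cases "n = 0")
  case False
  have "cycles_sum sum_prod_card_but_one n 1 \<le> fact n"
    using False cycles_sum_but_one_1[of n] fact_mono[of "n - 1" n] by simp
  moreover have "cycles_sum prod_card n 1 \<le> fact n"
    using False cycles_sum_prod_card_le[of n 1] by simp
  ultimately show ?thesis by simp
qed (simp add: cycles_sum_0)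

lemma cycles_sum_add_le_of_but_one_le:
  assumes m: "m \<ge> 2"
    and V: "cycles_sum sum_prod_card_but_one n m \<le> real m * fact n * real (n + 1) ^ (m - 2) * (1 + harm n)"
  shows "cycles_sum sum_prod_card_but_one n m + cycles_sum prod_card n m \<le>
           real (Suc m) * fact n * real (n + 1) ^ (m - 1)"
proof (cases "n = 0")
  case False
  have "real m * fact n * real (n + 1) ^ (m - 2) * (1 + harm n) \<le>
        real m * fact n * real (n + 1) ^ (m - 2) * real (n + 1)"
    using harm_le[of n] by (intro mult_left_mono) auto
  also have "\<dots> = real m * fact n * real (n + 1) ^ (m - 1)"
  proof -
    obtain j where "m = Suc (Suc j)" using m by (metis add_2_eq_Suc le_Suc_ex)
    then show ?thesis by (simp add: mult_ac)
  qed
  finally have V': "cycles_sum sum_prod_card_but_one n m \<le> real m * fact n * real (n + 1) ^ (m - 1)"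
    using V by linarith
  have "cycles_sum prod_card n m \<le> fact n * real n ^ (m - 1)"
    using cycles_sum_prod_card_le[of n m] False m by simp
  also have "\<dots> \<le> fact n * real (n + 1) ^ (m - 1)"
    by (intro mult_left_mono power_mono) auto
  finally show ?thesis using V' by (simp add: algebra_simps)
qed (use m in \<open>simp add: cycles_sum_0\<close>)

lemma cycles_sum_but_one_le:
  "m \<ge> 2 \<Longrightarrow>
   cycles_sum sum_prod_card_but_one n m \<le> real m * fact n * real (n + 1) ^ (m - 2) * (1 + harm n)"
proof (induction m arbitrary: n rule: nat_induct_at_least)
  case base
  show ?case
    by (rule cycles_sum_but_one_le_step) (use cycles_sum_1_add_le in simp_all)
next
  case (Suc m)
  show ?case
    by (rule cycles_sum_but_one_le_step) (use cycles_sum_add_le_of_but_one_le[OF Suc.hyps Suc.IH] Suc.hyps in simp_all)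
qed

section \<open>Counting factorisations into two involutions\<close>

definition reversing_involutions :: "nat \<Rightarrow> (nat \<Rightarrow> nat) \<Rightarrow> (nat \<Rightarrow> nat) set" where
  "reversing_involutions n \<sigma> = {\<tau>\<in>Sym n. \<tau> \<circ> \<tau> = id \<and> (\<sigma> \<circ> \<tau>) \<circ> (\<sigma> \<circ> \<tau>) = id}"

lemma finite_reversing_involutions: "finite (reversing_involutions n \<sigma>)"
  by (rule finite_subset[OF _ finite_Sym[of n]]) (auto simp: reversing_involutions_def)

lemma invol_eq_card_reversing_involutions:
  assumes "\<sigma> \<in> Sym n"
  shows "invol n \<sigma> = card (reversing_involutions n \<sigma>)"
proof -
  have "{(\<tau>1, \<tau>2). \<tau>1 \<in> Sym n \<and> \<tau>2 \<in> Sym n \<and> \<tau>1 \<circ> \<tau>1 = id \<and> \<tau>2 \<circ> \<tau>2 = id \<and> \<sigma> = \<tau>2 \<circ> \<tau>1}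
        = (\<lambda>\<tau>. (\<tau>, \<sigma> \<circ> \<tau>)) ` reversing_involutions n \<sigma>"
  proof (intro equalityI subsetI)
    fix p assume "p \<in> {(\<tau>1, \<tau>2). \<tau>1 \<in> Sym n \<and> \<tau>2 \<in> Sym n \<and> \<tau>1 \<circ> \<tau>1 = id \<and> \<tau>2 \<circ> \<tau>2 = id \<and> \<sigma> = \<tau>2 \<circ> \<tau>1}"
    then obtain \<tau>1 \<tau>2 where p: "p = (\<tau>1, \<tau>2)" "\<tau>1 \<in> Sym n" "\<tau>2 \<in> Sym n"
      "\<tau>1 \<circ> \<tau>1 = id" "\<tau>2 \<circ> \<tau>2 = id" "\<sigma> = \<tau>2 \<circ> \<tau>1"
      by blast
    have "\<sigma> \<circ> \<tau>1 = \<tau>2 \<circ> (\<tau>1 \<circ> \<tau>1)" unfolding p(6) by (simp only: o_assoc)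
    then have "\<tau>2 = \<sigma> \<circ> \<tau>1" using p(4) by simp
    then show "p \<in> (\<lambda>\<tau>. (\<tau>, \<sigma> \<circ> \<tau>)) ` reversing_involutions n \<sigma>"
      using p unfolding reversing_involutions_def by blast
  next
    fix p assume "p \<in> (\<lambda>\<tau>. (\<tau>, \<sigma> \<circ> \<tau>)) ` reversing_involutions n \<sigma>"
    then obtain \<tau> where \<tau>: "p = (\<tau>, \<sigma> \<circ> \<tau>)" "\<tau> \<in> Sym n" "\<tau> \<circ> \<tau> = id" "(\<sigma> \<circ> \<tau>) \<circ> (\<sigma> \<circ> \<tau>) = id"
      unfolding reversing_involutions_def by auto
    have "\<sigma> \<circ> \<tau> \<in> Sym n" using \<tau>(2) assms by (simp add: Sym_def permutes_compose)
    moreover have "\<sigma> = (\<sigma> \<circ> \<tau>) \<circ> \<tau>" using \<tau>(3) by (simp add: o_assoc[symmetric])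
    ultimately show "p \<in> {(\<tau>1, \<tau>2). \<tau>1 \<in> Sym n \<and> \<tau>2 \<in> Sym n \<and> \<tau>1 \<circ> \<tau>1 = id \<and> \<tau>2 \<circ> \<tau>2 = id \<and> \<sigma> = \<tau>2 \<circ> \<tau>1}"
      using \<tau> by blast
  qed
  moreover have "inj_on (\<lambda>\<tau>. (\<tau>, \<sigma> \<circ> \<tau>)) (reversing_involutions n \<sigma>)"
    by (rule inj_onI) simp
  ultimately show ?thesis
    unfolding invol_def by (simp add: card_image)
qed

lemma funpow_commute: "(f ^^ a) ((f ^^ b) x) = (f ^^ b) ((f ^^ a) x)"
  using fun_cong[OF funpow_add[of a b f], of x] fun_cong[OF funpow_add[of b a f], of x]
  by (simp add: add.commute)

lemma funpow_eq_funpow_shift: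
  "(f ^^ a) x = (f ^^ b) x \<Longrightarrow> (f ^^ a) ((f ^^ j) x) = (f ^^ b) ((f ^^ j) x)"
  by (simp add: funpow_commute[where a=a and b=j] funpow_commute[where a=b and b=j])

lemma inv_funpow_eq_if_funpow_eq:
  assumes "bij f" and "(f ^^ a) x = (f ^^ b) x"
  shows "(inv f ^^ a) x = (inv f ^^ b) x"
proof -
  have cancel: "(inv f ^^ k) ((f ^^ k) y) = y" for k y
    using inv_fn_o_fn_is_id[OF assms(1), of k] by (simp add: fun_eq_iff)
  have "(inv f ^^ a) x = (inv f ^^ a) ((inv f ^^ b) ((f ^^ a) x))"
    using assms(2) cancel by simp
  also have "\<dots> = (inv f ^^ b) x"
    by (simp only: funpow_commute[where a=a and b=b] cancel)
  finally show ?thesis .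
qed

context
  fixes n :: nat and \<sigma> :: "nat \<Rightarrow> nat"
  assumes \<sigma>: "\<sigma> permutes {..<n}"
begin

context
  fixes \<tau> assumes \<tau>: "\<tau> \<in> reversing_involutions n \<sigma>"
begin

lemma reversing_involution_permutes: "\<tau> permutes {..<n}"
  using \<tau> by (simp add: reversing_involutions_def Sym_def)

lemma reversing_involution_involutive [simp]: "\<tau> (\<tau> x) = x"
proof -
  have "\<tau> \<circ> \<tau> = id" using \<tau> by (simp add: reversing_involutions_def)
  from fun_cong[OF this, of x] show ?thesis by simp
qed

lemma reversing_involution_twist: "\<tau> (\<sigma> x) = inv \<sigma> (\<tau> x)"
proof -
  have "(\<sigma> \<circ> \<tau>) \<circ> (\<sigma> \<circ> \<tau>) = id" using \<tau> by (simp add: reversing_involutions_def)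
  from fun_cong[OF this, of "\<tau> x"] have "\<sigma> (\<tau> (\<sigma> x)) = \<tau> x" by simp
  then have "inv \<sigma> (\<sigma> (\<tau> (\<sigma> x))) = inv \<sigma> (\<tau> x)" by simp
  then show ?thesis using permutes_inverses(2)[OF \<sigma>] by simp
qed

lemma reversing_involution_funpow: "\<tau> ((\<sigma> ^^ k) x) = (inv \<sigma> ^^ k) (\<tau> x)"
  by (induction k) (simp_all add: reversing_involution_twist)

lemma reversing_involution_image_orbit: "\<tau> ` orbit \<sigma> x = orbit \<sigma> (\<tau> x)"
proof -
  have "orbit \<sigma> (\<tau> x) = orbit (inv \<sigma>) (\<tau> x)"
    using orbit_inv_eq[OF permutes_lessThan_permutation[OF \<sigma>]] by simp
  also have "\<dots> = range (\<lambda>k. (inv \<sigma> ^^ k) (\<tau> x))"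
    using orbit_altdef_permutation[OF permutation_inverse[OF permutes_lessThan_permutation[OF \<sigma>]]]
    by (simp add: full_SetCompr_eq)
  finally show ?thesis
    using orbit_funpow_altdef[OF \<sigma>]
    by (simp add: full_SetCompr_eq image_image reversing_involution_funpow)
qed

lemma card_orbit_reversing_involution: "card (orbit \<sigma> (\<tau> x)) = card (orbit \<sigma> x)"
proof -
  have "inj \<tau>" using permutes_inj[OF reversing_involution_permutes] .
  then show ?thesis
    by (simp flip: reversing_involution_image_orbit add: card_image inj_on_subset)
qed

end

lemma reversing_involutions_eq_on_orbit:
  assumes "\<tau>1 \<in> reversing_involutions n \<sigma>" "\<tau>2 \<in> reversing_involutions n \<sigma>"
    and "\<tau>1 x = \<tau>2 x" and "y \<in> orbit \<sigma> x"
  shows "\<tau>1 y = \<tau>2 y"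
  using assms(3,4) reversing_involution_funpow[OF assms(1)] reversing_involution_funpow[OF assms(2)]
  by (auto simp: orbit_funpow_altdef[OF \<sigma>])

lemma reversing_involutions_eqI:
  assumes "\<tau>1 \<in> reversing_involutions n \<sigma>" "\<tau>2 \<in> reversing_involutions n \<sigma>"
    and "\<And>C. C \<in> cycles n \<sigma> \<Longrightarrow> \<tau>1 (Min C) = \<tau>2 (Min C)"
  shows "\<tau>1 = \<tau>2"
proof
  fix x show "\<tau>1 x = \<tau>2 x"
  proof (cases "x < n")
    case True
    then have C: "orbit \<sigma> x \<in> cycles n \<sigma>" by (rule orbit_in_cycles[OF \<sigma>])
    then have "orbit \<sigma> (Min (orbit \<sigma> x)) = orbit \<sigma> x"
      using Min_cycle[OF \<sigma>] cycle_eq_orbit[OF \<sigma>] by blast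
    then have "x \<in> orbit \<sigma> (Min (orbit \<sigma> x))"
      using self_in_orbit[OF \<sigma>] by simp
    then show ?thesis using reversing_involutions_eq_on_orbit assms C by blast
  next
    case False
    then show ?thesis
      using permutes_not_in[OF reversing_involution_permutes[OF assms(1)]]
        permutes_not_in[OF reversing_involution_permutes[OF assms(2)]] by simp
  qed
qed

end

lemma card_PiE_same_card_le:
  assumes "finite R" "C0 \<in> R"
  shows "real (card (\<Pi>\<^sub>E C\<in>R - {C0}. \<Union>{C'\<in>R. card C' = card C})) \<le>
         real (card R) ^ card R * prod_card (R - {C0})"
proof -
  let ?K = "real (card R)"
  have bound: "card (\<Union>{C'\<in>R. card C' = card C}) \<le> card R * card C" for C
  proof -
    have "card (\<Union>{C'\<in>R. card C' = card C}) \<le> sum card {C'\<in>R. card C' = card C}"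
      by (rule card_Union_le_sum_card)
    also have "\<dots> = card {C'\<in>R. card C' = card C} * card C" by simp
    also have "\<dots> \<le> card R * card C" using assms by (intro mult_le_mono1 card_mono) auto
    finally show ?thesis .
  qed
  have "real (card (\<Union>{C'\<in>R. card C' = card C})) \<le> ?K * real (card C)" for C
    using bound[of C] by (simp only: of_nat_mult[symmetric] of_nat_le_iff)
  then have "(\<Prod>C\<in>R - {C0}. real (card (\<Union>{C'\<in>R. card C' = card C}))) \<le> (\<Prod>C\<in>R - {C0}. ?K * real (card C))"
    by (intro prod_mono) simp
  also have "\<dots> = ?K ^ card (R - {C0}) * prod_card (R - {C0})"
    by (simp add: prod.distrib prod_card_def)
  also have "\<dots> \<le> ?K ^ card R * prod_card (R - {C0})"
  proof (rule mult_right_mono[OF power_increasing prod_card_nonneg])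
    show "card (R - {C0}) \<le> card R" using assms(1) by (rule card_mono) auto
    have "card R \<noteq> 0" using assms by auto
    then show "1 \<le> ?K" by simp
  qed
  finally show ?thesis
    using assms by (simp add: card_PiE)
qed

context
  fixes n :: nat and \<sigma> :: "nat \<Rightarrow> nat"
  assumes \<sigma>: "\<sigma> permutes {..<n}"
begin

lemma card_cycle_preserving_reversing_involutions_le:
  "card {\<tau>\<in>reversing_involutions n \<sigma>. \<forall>C\<in>cycles n \<sigma>. \<tau> (Min C) \<in> C} \<le> prod_card (cycles n \<sigma>)"
proof -
  have "card {\<tau>\<in>reversing_involutions n \<sigma>. \<forall>C\<in>cycles n \<sigma>. \<tau> (Min C) \<in> C}
        \<le> card (\<Pi>\<^sub>E C\<in>cycles n \<sigma>. C)"
  proof (rule card_inj_on_le)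
    show "inj_on (\<lambda>\<tau>. restrict (\<lambda>C. \<tau> (Min C)) (cycles n \<sigma>))
            {\<tau>\<in>reversing_involutions n \<sigma>. \<forall>C\<in>cycles n \<sigma>. \<tau> (Min C) \<in> C}"
    proof (rule inj_onI)
      fix \<tau>1 \<tau>2
      assume "\<tau>1 \<in> {\<tau>\<in>reversing_involutions n \<sigma>. \<forall>C\<in>cycles n \<sigma>. \<tau> (Min C) \<in> C}"
        and "\<tau>2 \<in> {\<tau>\<in>reversing_involutions n \<sigma>. \<forall>C\<in>cycles n \<sigma>. \<tau> (Min C) \<in> C}"
        and eq: "restrict (\<lambda>C. \<tau>1 (Min C)) (cycles n \<sigma>) = restrict (\<lambda>C. \<tau>2 (Min C)) (cycles n \<sigma>)"
      then have "\<tau>1 \<in> reversing_involutions n \<sigma>" "\<tau>2 \<in> reversing_involutions n \<sigma>" by auto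
      moreover have "\<tau>1 (Min C) = \<tau>2 (Min C)" if "C \<in> cycles n \<sigma>" for C
        using fun_cong[OF eq, of C] that by simp
      ultimately show "\<tau>1 = \<tau>2" by (rule reversing_involutions_eqI[OF \<sigma>])
    qed
    show "finite (\<Pi>\<^sub>E C\<in>cycles n \<sigma>. C)"
      by (intro finite_PiE finite_cycles finite_cycle[OF \<sigma>])
    show "(\<lambda>\<tau>. restrict (\<lambda>C. \<tau> (Min C)) (cycles n \<sigma>)) `
            {\<tau>\<in>reversing_involutions n \<sigma>. \<forall>C\<in>cycles n \<sigma>. \<tau> (Min C) \<in> C} \<subseteq> (\<Pi>\<^sub>E C\<in>cycles n \<sigma>. C)"
      by (auto simp: restrict_PiE_iff)
  qed
  then have "card {\<tau>\<in>reversing_involutions n \<sigma>. \<forall>C\<in>cycles n \<sigma>. \<tau> (Min C) \<in> C}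
             \<le> (\<Prod>C\<in>cycles n \<sigma>. card C)"
    by (simp add: card_PiE)
  then show ?thesis
    unfolding prod_card_def of_nat_prod[symmetric] of_nat_le_iff .
qed

lemma reversing_involutions_eq_if_moving:
  assumes RI: "\<tau>1 \<in> reversing_involutions n \<sigma>" "\<tau>2 \<in> reversing_involutions n \<sigma>"
    and C0: "C0 \<in> cycles n \<sigma>" and moving: "\<tau>1 (Min C0) \<notin> C0"
    and agree: "\<And>C. C \<in> cycles n \<sigma> - {C0} \<Longrightarrow> \<tau>1 (Min C) = \<tau>2 (Min C)"
  shows "\<tau>1 = \<tau>2"
proof -
  have agree_off: "\<tau>1 x = \<tau>2 x" if "x < n" "orbit \<sigma> x \<noteq> C0" for x
  proof -
    have C: "orbit \<sigma> x \<in> cycles n \<sigma>" using that(1) by (rule orbit_in_cycles[OF \<sigma>])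
    have "x \<in> orbit \<sigma> (Min (orbit \<sigma> x))"
      using cycle_eq_orbit[OF \<sigma> C Min_cycle[OF \<sigma> C]] self_in_orbit[OF \<sigma>] by simp
    then show ?thesis
      using reversing_involutions_eq_on_orbit[OF \<sigma> RI] agree C that(2) by blast
  qed
  \<comment> \<open>The partner \<open>y\<close> of \<open>Min C0\<close> lies off \<open>C0\<close>, where the two involutions agree.\<close>
  let ?y = "\<tau>1 (Min C0)"
  have y_lt: "?y < n"
    using permutes_in_image[OF reversing_involution_permutes[OF \<sigma> RI(1)]]
      Min_cycle[OF \<sigma> C0] cycle_subset[OF \<sigma> C0] by auto
  have y_off: "orbit \<sigma> ?y \<noteq> C0"
    using moving self_in_orbit[OF \<sigma>, of ?y] by blast
  have "\<tau>2 ?y = \<tau>1 ?y" using agree_off[OF y_lt y_off] by (rule sym)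
  then have "\<tau>2 ?y = Min C0" using reversing_involution_involutive[OF \<sigma> RI(1)] by simp
  then have "\<tau>2 (Min C0) = ?y" using reversing_involution_involutive[OF \<sigma> RI(2), of ?y] by simp
  then have "\<tau>1 (Min C) = \<tau>2 (Min C)" if "C \<in> cycles n \<sigma>" for C
    using agree that by (cases "C = C0") auto
  then show ?thesis using reversing_involutions_eqI[OF \<sigma> RI] by blast
qed

lemma reversing_involution_Min_in_same_card:
  assumes \<tau>: "\<tau> \<in> reversing_involutions n \<sigma>" and C: "C \<in> cycles n \<sigma>"
  shows "\<tau> (Min C) \<in> \<Union>{C'\<in>cycles n \<sigma>. card C' = card C}"
proof -
  have "\<tau> (Min C) < n"
    using permutes_in_image[OF reversing_involution_permutes[OF \<sigma> \<tau>]]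
      Min_cycle[OF \<sigma> C] cycle_subset[OF \<sigma> C] by auto
  moreover have "card (orbit \<sigma> (\<tau> (Min C))) = card C"
    using card_orbit_reversing_involution[OF \<sigma> \<tau>] cycle_eq_orbit[OF \<sigma> C Min_cycle[OF \<sigma> C]] by simp
  ultimately show ?thesis
    using orbit_in_cycles[OF \<sigma>] self_in_orbit[OF \<sigma>] by blast
qed

lemma card_cycle_moving_reversing_involutions_le:
  assumes C0: "C0 \<in> cycles n \<sigma>"
  shows "card {\<tau>\<in>reversing_involutions n \<sigma>. \<tau> (Min C0) \<notin> C0} \<le>
         card (\<Pi>\<^sub>E C\<in>cycles n \<sigma> - {C0}. \<Union>{C'\<in>cycles n \<sigma>. card C' = card C})"
proof (rule card_inj_on_le)
  let ?T = "{\<tau>\<in>reversing_involutions n \<sigma>. \<tau> (Min C0) \<notin> C0}"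
  show "inj_on (\<lambda>\<tau>. restrict (\<lambda>C. \<tau> (Min C)) (cycles n \<sigma> - {C0})) ?T"
  proof (rule inj_onI)
    fix \<tau>1 \<tau>2 assume \<tau>: "\<tau>1 \<in> ?T" "\<tau>2 \<in> ?T"
      and eq: "restrict (\<lambda>C. \<tau>1 (Min C)) (cycles n \<sigma> - {C0}) = restrict (\<lambda>C. \<tau>2 (Min C)) (cycles n \<sigma> - {C0})"
    have agree: "\<tau>1 (Min C) = \<tau>2 (Min C)" if "C \<in> cycles n \<sigma> - {C0}" for C
      using fun_cong[OF eq, of C] that by simp
    show "\<tau>1 = \<tau>2"
      by (rule reversing_involutions_eq_if_moving[OF _ _ C0]) (use \<tau> agree in auto)
  qed
  show "(\<lambda>\<tau>. restrict (\<lambda>C. \<tau> (Min C)) (cycles n \<sigma> - {C0})) ` ?T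
        \<subseteq> (\<Pi>\<^sub>E C\<in>cycles n \<sigma> - {C0}. \<Union>{C'\<in>cycles n \<sigma>. card C' = card C})"
  proof (rule subsetI)
    fix f assume "f \<in> (\<lambda>\<tau>. restrict (\<lambda>C. \<tau> (Min C)) (cycles n \<sigma> - {C0})) ` ?T"
    then obtain \<tau> where \<tau>: "\<tau> \<in> reversing_involutions n \<sigma>"
      and f: "f = restrict (\<lambda>C. \<tau> (Min C)) (cycles n \<sigma> - {C0})" by blast
    show "f \<in> (\<Pi>\<^sub>E C\<in>cycles n \<sigma> - {C0}. \<Union>{C'\<in>cycles n \<sigma>. card C' = card C})"
      unfolding f using reversing_involution_Min_in_same_card[OF \<tau>] by (auto simp: restrict_PiE_iff)
  qed
  show "finite (\<Pi>\<^sub>E C\<in>cycles n \<sigma> - {C0}. \<Union>{C'\<in>cycles n \<sigma>. card C' = card C})"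
    using finite_cycle[OF \<sigma>] by (intro finite_PiE) auto
qed

lemma card_reversing_involutions_le:
  "real (card (reversing_involutions n \<sigma>)) \<le>
     prod_card (cycles n \<sigma>) + real (Kcyc n \<sigma>) ^ Kcyc n \<sigma> * sum_prod_card_but_one (cycles n \<sigma>)"
proof -
  let ?R = "cycles n \<sigma>" and ?K = "real (Kcyc n \<sigma>)"
  let ?T0 = "{\<tau>\<in>reversing_involutions n \<sigma>. \<forall>C\<in>?R. \<tau> (Min C) \<in> C}"
  let ?T1 = "\<lambda>C0. {\<tau>\<in>reversing_involutions n \<sigma>. \<tau> (Min C0) \<notin> C0}"
  have "reversing_involutions n \<sigma> \<subseteq> ?T0 \<union> (\<Union>C0\<in>?R. ?T1 C0)" by blast
  then have "card (reversing_involutions n \<sigma>) \<le> card (?T0 \<union> (\<Union>C0\<in>?R. ?T1 C0))"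
    by (rule card_mono[rotated]) (auto intro: finite_subset[OF _ finite_reversing_involutions])
  also have "\<dots> \<le> card ?T0 + (\<Sum>C0\<in>?R. card (?T1 C0))"
    by (intro card_Un_le[THEN order_trans] add_left_mono card_UN_le finite_cycles)
  finally have "real (card (reversing_involutions n \<sigma>)) \<le> real (card ?T0) + (\<Sum>C0\<in>?R. real (card (?T1 C0)))"
    by (simp flip: of_nat_sum of_nat_add)
  also have "\<dots> \<le> prod_card ?R + (\<Sum>C0\<in>?R. ?K ^ Kcyc n \<sigma> * prod_card (?R - {C0}))"
  proof (intro add_mono sum_mono)
    show "real (card ?T0) \<le> prod_card ?R"
      using card_cycle_preserving_reversing_involutions_le by simp
    fix C0 assume C0: "C0 \<in> ?R"
    have "real (card (?T1 C0)) \<le>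
          real (card (\<Pi>\<^sub>E C\<in>?R - {C0}. \<Union>{C'\<in>?R. card C' = card C}))"
      using card_cycle_moving_reversing_involutions_le[OF C0] by simp
    also have "\<dots> \<le> real (card ?R) ^ card ?R * prod_card (?R - {C0})"
      by (rule card_PiE_same_card_le[OF finite_cycles C0])
    finally show "real (card (?T1 C0)) \<le> ?K ^ Kcyc n \<sigma> * prod_card (?R - {C0})"
      by (simp add: Kcyc_eq_card_cycles[OF \<sigma>])
  qed
  also have "\<dots> = prod_card ?R + ?K ^ Kcyc n \<sigma> * sum_prod_card_but_one ?R"
    by (simp add: sum_prod_card_but_one_def sum_distrib_left)
  finally show ?thesis .
qed

end

text \<open>The reflection of each cycle \<open>C\<close> sending \<open>Min C\<close> to the chosen point \<open>y C\<close>.\<close>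

definition cycle_reflection :: "nat \<Rightarrow> (nat \<Rightarrow> nat) \<Rightarrow> (nat set \<Rightarrow> nat) \<Rightarrow> nat \<Rightarrow> nat" where
  "cycle_reflection n \<sigma> y x =
     (if x < n then (inv \<sigma> ^^ funpow_dist \<sigma> (Min (orbit \<sigma> x)) x) (y (orbit \<sigma> x)) else x)"

context
  fixes n :: nat and \<sigma> :: "nat \<Rightarrow> nat" and y :: "nat set \<Rightarrow> nat"
  assumes \<sigma>: "\<sigma> permutes {..<n}"
    and y: "\<And>C. C \<in> cycles n \<sigma> \<Longrightarrow> y C \<in> C"
begin

private abbreviation "\<rho> \<equiv> cycle_reflection n \<sigma> y"

lemma cycle_reflection_funpow:
  assumes C: "C \<in> cycles n \<sigma>"
  shows "\<rho> ((\<sigma> ^^ k) (Min C)) = (inv \<sigma> ^^ k) (y C)"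
proof -
  let ?r = "Min C" and ?x = "(\<sigma> ^^ k) (Min C)"
  have r: "?r \<in> C" by (rule Min_cycle[OF \<sigma> C])
  have x: "?x \<in> C" by (rule funpow_in_cycle[OF \<sigma> C r])
  then have x_lt: "?x < n" and orbit_x: "orbit \<sigma> ?x = C"
    using cycle_subset[OF \<sigma> C] cycle_eq_orbit[OF \<sigma> C] by auto
  have "?x \<in> orbit \<sigma> ?r" using x cycle_eq_orbit[OF \<sigma> C r] by simp
  then have "(\<sigma> ^^ funpow_dist \<sigma> ?r ?x) ?r = (\<sigma> ^^ k) ?r" by (rule funpow_dist_prop)
  moreover obtain j where "y C = (\<sigma> ^^ j) ?r"
    using y[OF C] cycle_eq_orbit[OF \<sigma> C r] orbit_funpow_altdef[OF \<sigma>] by blast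
  ultimately have "(\<sigma> ^^ funpow_dist \<sigma> ?r ?x) (y C) = (\<sigma> ^^ k) (y C)"
    using funpow_eq_funpow_shift by simp
  then have "(inv \<sigma> ^^ funpow_dist \<sigma> ?r ?x) (y C) = (inv \<sigma> ^^ k) (y C)"
    by (rule inv_funpow_eq_if_funpow_eq[OF permutes_bij[OF \<sigma>]])
  then show ?thesis
    using x_lt orbit_x by (simp add: cycle_reflection_def)
qed

lemma cycle_reflection_Min: "C \<in> cycles n \<sigma> \<Longrightarrow> \<rho> (Min C) = y C"
  using cycle_reflection_funpow[of C 0] by simp

lemma cycle_reflection_twist: "\<rho> (\<sigma> z) = inv \<sigma> (\<rho> z)"
proof (cases "z < n")
  case True
  then have C: "orbit \<sigma> z \<in> cycles n \<sigma>" by (rule orbit_in_cycles[OF \<sigma>])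
  have "z \<in> orbit \<sigma> (Min (orbit \<sigma> z))"
    using cycle_eq_orbit[OF \<sigma> C Min_cycle[OF \<sigma> C]] self_in_orbit[OF \<sigma>] by simp
  then obtain k where z: "z = (\<sigma> ^^ k) (Min (orbit \<sigma> z))"
    using orbit_funpow_altdef[OF \<sigma>] by blast
  have "\<sigma> z = (\<sigma> ^^ Suc k) (Min (orbit \<sigma> z))" by (subst z) simp
  then show ?thesis
    using cycle_reflection_funpow[OF C, of "Suc k"] cycle_reflection_funpow[OF C, of k] z by simp
next
  case False
  then show ?thesis
    using permutes_not_in[OF \<sigma>] permutes_not_in[OF permutes_inv[OF \<sigma>]]
    by (simp add: cycle_reflection_def)
qed

lemma cycle_reflection_inv_funpow:
  "C \<in> cycles n \<sigma> \<Longrightarrow> z \<in> C \<Longrightarrow> \<rho> ((inv \<sigma> ^^ k) z) = (\<sigma> ^^ k) (\<rho> z)"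
proof (induction k arbitrary: z)
  case (Suc k)
  have "inv \<sigma> z \<in> C" by (rule inv_in_cycle[OF \<sigma> Suc.prems])
  then have "\<rho> ((inv \<sigma> ^^ k) (inv \<sigma> z)) = (\<sigma> ^^ k) (\<rho> (inv \<sigma> z))"
    using Suc.IH Suc.prems(1) by blast
  moreover have "\<rho> (inv \<sigma> z) = \<sigma> (\<rho> z)"
    using cycle_reflection_twist[of "inv \<sigma> z"] permutes_inverses[OF \<sigma>] by simp
  ultimately show ?case by (simp add: funpow_Suc_right funpow_swap1)
qed simp

lemma cycle_reflection_involutive: "\<rho> (\<rho> x) = x"
proof (cases "x < n")
  case True
  let ?C = "orbit \<sigma> x"
  have C: "?C \<in> cycles n \<sigma>" using True by (rule orbit_in_cycles[OF \<sigma>])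
  let ?r = "Min ?C"
  have orbit_r: "orbit \<sigma> ?r = ?C" by (rule cycle_eq_orbit[OF \<sigma> C Min_cycle[OF \<sigma> C]])
  obtain k where x: "x = (\<sigma> ^^ k) ?r"
    using self_in_orbit[OF \<sigma>, of x] orbit_r orbit_funpow_altdef[OF \<sigma>] by blast
  obtain j where yC: "y ?C = (\<sigma> ^^ j) ?r"
    using y[OF C] orbit_r orbit_funpow_altdef[OF \<sigma>] by blast
  have "\<rho> (y ?C) = (inv \<sigma> ^^ j) ((\<sigma> ^^ j) ?r)"
    using cycle_reflection_funpow[OF C, of j] yC by simp
  also have "\<dots> = ?r"
    using inv_fn_o_fn_is_id[OF permutes_bij[OF \<sigma>], of j] by (simp add: fun_eq_iff)
  finally have \<rho>_yC: "\<rho> (y ?C) = ?r" .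
  have "\<rho> (\<rho> x) = \<rho> ((inv \<sigma> ^^ k) (y ?C))"
    using cycle_reflection_funpow[OF C, of k] x by simp
  also have "\<dots> = (\<sigma> ^^ k) ?r"
    using cycle_reflection_inv_funpow[OF C y[OF C]] \<rho>_yC by simp
  finally show ?thesis using x by simp
qed (simp add: cycle_reflection_def)

lemma cycle_reflection_in_reversing_involutions: "\<rho> \<in> reversing_involutions n \<sigma>"
proof -
  have "bij \<rho>"
    by (rule involuntory_imp_bij) (rule cycle_reflection_involutive)
  then have "\<rho> permutes {..<n}"
    unfolding permutes_def bij_iff by (simp add: cycle_reflection_def)
  moreover have "\<rho> \<circ> \<rho> = id"
    by (simp add: fun_eq_iff cycle_reflection_involutive)
  moreover have "(\<sigma> \<circ> \<rho>) \<circ> (\<sigma> \<circ> \<rho>) = id"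
    by (simp add: fun_eq_iff cycle_reflection_twist cycle_reflection_involutive permutes_inverses[OF \<sigma>])
  ultimately show ?thesis
    by (simp add: reversing_involutions_def Sym_def)
qed

end

lemma prod_card_le_card_reversing_involutions:
  assumes \<sigma>: "\<sigma> permutes {..<n}"
  shows "prod_card (cycles n \<sigma>) \<le> real (card (reversing_involutions n \<sigma>))"
proof -
  have "card (\<Pi>\<^sub>E C\<in>cycles n \<sigma>. C) \<le> card (reversing_involutions n \<sigma>)"
  proof (rule card_inj_on_le[OF _ _ finite_reversing_involutions])
    show "inj_on (cycle_reflection n \<sigma>) (\<Pi>\<^sub>E C\<in>cycles n \<sigma>. C)"
    proof (rule inj_onI)
      fix y1 y2 assume y1: "y1 \<in> (\<Pi>\<^sub>E C\<in>cycles n \<sigma>. C)" and y2: "y2 \<in> (\<Pi>\<^sub>E C\<in>cycles n \<sigma>. C)"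
        and eq: "cycle_reflection n \<sigma> y1 = cycle_reflection n \<sigma> y2"
      show "y1 = y2"
      proof (rule PiE_ext[OF y1 y2])
        fix C assume C: "C \<in> cycles n \<sigma>"
        have y1C: "\<And>C. C \<in> cycles n \<sigma> \<Longrightarrow> y1 C \<in> C" and y2C: "\<And>C. C \<in> cycles n \<sigma> \<Longrightarrow> y2 C \<in> C"
          using y1 y2 by auto
        have "y1 C = cycle_reflection n \<sigma> y1 (Min C)"
          using cycle_reflection_Min[OF \<sigma> y1C C] by simp
        also have "\<dots> = y2 C"
          using cycle_reflection_Min[OF \<sigma> y2C C] eq by simp
        finally show "y1 C = y2 C" .
      qed
    qed
    show "cycle_reflection n \<sigma> ` (\<Pi>\<^sub>E C\<in>cycles n \<sigma>. C) \<subseteq> reversing_involutions n \<sigma>"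
      using cycle_reflection_in_reversing_involutions[OF \<sigma>] by auto
  qed
  then have "(\<Prod>C\<in>cycles n \<sigma>. card C) \<le> card (reversing_involutions n \<sigma>)"
    by (simp add: card_PiE)
  then show ?thesis
    unfolding prod_card_def of_nat_prod[symmetric] of_nat_le_iff .
qed

lemma invol_bounds:
  assumes "\<sigma> \<in> Sym n"
  shows "prod_card (cycles n \<sigma>) \<le> real (invol n \<sigma>)"
    and "real (invol n \<sigma>) \<le>
           prod_card (cycles n \<sigma>) + real (Kcyc n \<sigma>) ^ Kcyc n \<sigma> * sum_prod_card_but_one (cycles n \<sigma>)"
  using prod_card_le_card_reversing_involutions card_reversing_involutions_le assms
  by (simp_all add: invol_eq_card_reversing_involutions Sym_def)

section \<open>Asymptotics\<close>

lemma power_diff_le: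
  fixes a b :: real
  assumes "0 \<le> b" "b \<le> a"
  shows "a ^ k - b ^ k \<le> real k * (a - b) * a ^ (k - 1)"
proof (induction k)
  case (Suc k)
  have a0: "a \<ge> 0" using assms by linarith
  have "a ^ Suc k - b ^ Suc k = a * (a ^ k - b ^ k) + (a - b) * b ^ k" by (simp add: algebra_simps)
  also have "\<dots> \<le> a * (real k * (a - b) * a ^ (k - 1)) + (a - b) * a ^ k"
    using Suc.IH a0 assms by (intro add_mono mult_left_mono mult_right_mono power_mono) auto
  also have "a * (real k * (a - b) * a ^ (k - 1)) = real k * (a - b) * a ^ k"
    by (cases k) (simp_all add: algebra_simps)
  finally show ?case by (simp add: algebra_simps)
qed simp

lemma power_add_ge:
  fixes b x :: real
  assumes "0 \<le> b" "0 \<le> x"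
  shows "b ^ k + real k * x * b ^ (k - 1) \<le> (b + x) ^ k"
proof (induction k)
  case (Suc k)
  have "b ^ Suc k + real (Suc k) * x * b ^ k \<le> (b + x) * (b ^ k + real k * x * b ^ (k - 1))"
  proof (cases k)
    case (Suc k')
    have "0 \<le> real k * x * x * b ^ k'" using assms by simp
    then show ?thesis using Suc by (simp add: algebra_simps)
  qed (simp add: algebra_simps)
  also have "\<dots> \<le> (b + x) * (b + x) ^ k"
    using Suc.IH assms by (intro mult_left_mono) auto
  finally show ?case by simp
qed simp

lemma power_add_le_second_order:
  fixes h x :: real
  assumes "0 \<le> h" "0 \<le> x"
  shows "(h + x) ^ k - h ^ k - real k * x * h ^ (k - 1) \<le> real k * real (k - 1) * x\<^sup>2 * (h + x) ^ (k - 2)"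
proof -
  have "(h + x) ^ k - h ^ k \<le> real k * x * (h + x) ^ (k - 1)"
    using power_diff_le[of h "h + x" k] assms by simp
  moreover have "(h + x) ^ (k - 1) - h ^ (k - 1) \<le> real (k - 1) * x * (h + x) ^ (k - 2)"
    using power_diff_le[of h "h + x" "k - 1"] assms by (simp add: diff_diff_left numeral_2_eq_2)
  then have "real k * x * ((h + x) ^ (k - 1) - h ^ (k - 1)) \<le> real k * x * (real (k - 1) * x * (h + x) ^ (k - 2))"
    using assms by (intro mult_left_mono) auto
  ultimately show ?thesis by (simp add: algebra_simps power2_eq_square)
qed

text \<open>The normalised Stirling numbers \<open>E n k = stirling n (k + 1) / (n - 1)!\<close> satisfy
  \<open>E (n + 1) k = E n k + E n (k - 1) / n\<close>, while \<open>h = harm (n - 1)\<close> grows by \<open>x = 1 / n\<close>.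
  The next lemmas are one step of this recursion for the upper bound \<open>h ^ k / k!\<close> and for
  the lower bound \<open>h ^ k / k! - 2 k\<^sup>2 (1 + h) ^ (k - 1)\<close>.\<close>

lemma power_div_fact_step_le:
  fixes h x :: real
  assumes "0 \<le> h" "0 \<le> x" "k \<ge> 1"
  shows "h ^ k / fact k + x * (h ^ (k - 1) / fact (k - 1)) \<le> (h + x) ^ k / fact k"
proof -
  have fk: "fact k = real k * fact (k - 1)" using assms(3) by (cases k) auto
  have "h ^ k / fact k + x * (h ^ (k - 1) / fact (k - 1)) = (h ^ k + real k * x * h ^ (k - 1)) / fact k"
    using assms(3) by (simp add: fk field_simps)
  also have "\<dots> \<le> (h + x) ^ k / fact k"
    using power_add_ge[OF assms(1,2), of k] by (intro divide_right_mono) auto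
  finally show ?thesis .
qed

lemma power_add_remainder_div_fact_le:
  fixes h x :: real
  assumes h: "0 \<le> h" and x: "0 \<le> x" "x \<le> 1"
  shows "((h + x) ^ k - h ^ k - real k * x * h ^ (k - 1)) / fact k \<le> real k * real (k - 1) * x * (1 + h) ^ (k - 2)"
proof -
  let ?e = "(h + x) ^ k - h ^ k - real k * x * h ^ (k - 1)"
  have "?e \<ge> 0" using power_add_ge[OF h x(1), of k] by simp
  then have "?e / fact k \<le> ?e"
    by (simp add: divide_le_eq mult_le_cancel_left1 mult_le_cancel_right1)
  also have "\<dots> \<le> real k * real (k - 1) * x\<^sup>2 * (h + x) ^ (k - 2)"
    by (rule power_add_le_second_order[OF h x(1)])
  also have "\<dots> \<le> real k * real (k - 1) * x * (1 + h) ^ (k - 2)"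
  proof -
    have "x\<^sup>2 \<le> x" using x by (simp add: power2_eq_square mult_left_le)
    moreover have "(h + x) ^ (k - 2) \<le> (1 + h) ^ (k - 2)" using h x by (intro power_mono) auto
    ultimately have "x\<^sup>2 * (h + x) ^ (k - 2) \<le> x * (1 + h) ^ (k - 2)" using x h by (intro mult_mono) auto
    then show ?thesis by (simp add: mult.assoc mult_left_mono)
  qed
  finally show ?thesis .
qed

lemma power_div_fact_step_ge:
  fixes h x :: real
  assumes h: "0 \<le> h" and x: "0 \<le> x" "x \<le> 1" and k: "k \<ge> 2"
  shows "(h + x) ^ k / fact k - 2 * real k ^ 2 * (1 + h + x) ^ (k - 1) \<le>
         (h ^ k / fact k - 2 * real k ^ 2 * (1 + h) ^ (k - 1)) +
         x * (h ^ (k - 1) / fact (k - 1) - 2 * real (k - 1) ^ 2 * (1 + h) ^ (k - 2))"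
proof -
  let ?P = "(1 + h) ^ (k - 2)" and ?e = "(h + x) ^ k - h ^ k - real k * x * h ^ (k - 1)"
  have fk: "fact k = real k * fact (k - 1)" using k by (cases k) auto
  have growth: "(1 + h) ^ (k - 1) + real (k - 1) * x * ?P \<le> (1 + h + x) ^ (k - 1)"
    using power_add_ge[of "1 + h" x "k - 1"] h x by (simp add: diff_diff_left numeral_2_eq_2)
  have coeff: "real k * real (k - 1) + 2 * real (k - 1) ^ 2 \<le> 2 * real k ^ 2 * real (k - 1)"
  proof -
    have "real k * real (k - 1) + 2 * real (k - 1) ^ 2 = real (k - 1) * (3 * real k - 2)"
      using k by (simp add: of_nat_diff power2_eq_square algebra_simps)
    also have "\<dots> \<le> real (k - 1) * (2 * real k ^ 2)"
    proof (rule mult_left_mono)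
      have "2 * real k \<le> real k * real k" using k by (intro mult_right_mono) auto
      then show "3 * real k - 2 \<le> 2 * real k ^ 2" by (simp add: power2_eq_square)
    qed simp
    finally show ?thesis by (simp add: algebra_simps)
  qed
  have "(h + x) ^ k / fact k - 2 * real k ^ 2 * (1 + h + x) ^ (k - 1) \<le>
        (h + x) ^ k / fact k - 2 * real k ^ 2 * ((1 + h) ^ (k - 1) + real (k - 1) * x * ?P)"
    using growth by (intro diff_left_mono mult_left_mono) auto
  also have "\<dots> = h ^ k / fact k - 2 * real k ^ 2 * (1 + h) ^ (k - 1) + x * (real k * h ^ (k - 1) / fact k)
         + ?e / fact k - 2 * real k ^ 2 * real (k - 1) * x * ?P"
    by (simp add: field_simps)
  also have "\<dots> \<le> h ^ k / fact k - 2 * real k ^ 2 * (1 + h) ^ (k - 1) + x * (real k * h ^ (k - 1) / fact k)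
         - x * (2 * real (k - 1) ^ 2 * ?P)"
  proof -
    have "(real k * real (k - 1) + 2 * real (k - 1) ^ 2) * (x * ?P) \<le> (2 * real k ^ 2 * real (k - 1)) * (x * ?P)"
      using coeff x h by (intro mult_right_mono) auto
    then show ?thesis
      using power_add_remainder_div_fact_le[OF h x, of k] by (simp add: algebra_simps)
  qed
  also have "\<dots> = (h ^ k / fact k - 2 * real k ^ 2 * (1 + h) ^ (k - 1)) +
         x * (h ^ (k - 1) / fact (k - 1) - 2 * real (k - 1) ^ 2 * (1 + h) ^ (k - 2))"
    using k by (simp add: fk algebra_simps)
  finally show ?thesis .
qed

lemma stirling_Suc_Suc_div_fact:
  assumes "n \<ge> 1"
  shows "real (stirling (Suc n) (Suc (Suc k))) / fact n =
           real (stirling n (Suc (Suc k))) / fact (n - 1) + 1 / real n * (real (stirling n (Suc k)) / fact (n - 1))"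
proof -
  have "fact n = real n * (fact (n - 1) :: real)" using assms by (cases n) auto
  then show ?thesis using assms by (simp add: field_simps)
qed

lemma harm_pred_Suc: "n \<ge> 1 \<Longrightarrow> harm (Suc n - 1) = harm (n - 1) + 1 / (real n :: real)"
  by (cases n) (simp_all add: harm_Suc field_simps)

lemma stirling_harm_upper:
  "n \<ge> 1 \<Longrightarrow> real (stirling n (Suc k)) / fact (n - 1) \<le> harm (n - 1) ^ k / fact k"
proof (induction n arbitrary: k rule: nat_induct_at_least)
  case base
  then show ?case by (cases k) (simp_all add: harm_def)
next
  case (Suc n)
  let ?h = "harm (n - 1) :: real" and ?x = "1 / real n"
  show ?case
  proof (cases k)
    case 0
    then show ?thesis by (simp del: stirling.simps add: stirling_Suc_n_1)
  next
    case (Suc k')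
    have "real (stirling (Suc n) (Suc k)) / fact n \<le> ?h ^ k / fact k + ?x * (?h ^ k' / fact k')"
      unfolding Suc stirling_Suc_Suc_div_fact[OF Suc.hyps]
      using Suc.IH[of "Suc k'"] Suc.IH[of k'] by (intro add_mono mult_left_mono) auto
    also have "\<dots> \<le> (?h + ?x) ^ k / fact k"
      using power_div_fact_step_le[of ?h ?x k] Suc by (simp add: harm_nonneg)
    finally show ?thesis using harm_pred_Suc[OF Suc.hyps] by simp
  qed
qed

lemma stirling_harm_lower:
  "n \<ge> 1 \<Longrightarrow> harm (n - 1) ^ k / fact k - 2 * real k ^ 2 * (1 + harm (n - 1)) ^ (k - 1)
                 \<le> real (stirling n (Suc k)) / fact (n - 1)"
proof (induction n arbitrary: k rule: nat_induct_at_least)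
  case base
  then show ?case by (cases k) (simp_all add: harm_def)
next
  case (Suc n)
  let ?h = "harm (n - 1) :: real" and ?x = "1 / real n"
  have x: "0 \<le> ?x" "?x \<le> 1" using Suc.hyps by auto
  consider "k = 0" | "k = 1" | k' where "k = Suc (Suc k')"
    by (metis One_nat_def not0_implies_Suc)
  then show ?case
  proof cases
    case 1
    then show ?thesis by (simp del: stirling.simps add: stirling_Suc_n_1)
  next
    case 2
    have "?h - 2 + ?x \<le> real (stirling n (Suc 1)) / fact (n - 1) + ?x * 1"
      using Suc.IH[of 1] by simp
    also have "\<dots> = real (stirling (Suc n) (Suc 1)) / fact n"
      using stirling_Suc_Suc_div_fact[OF Suc.hyps, of 0] \<open>n \<ge> 1\<close>
      by (cases n) (simp_all del: stirling.simps add: stirling_Suc_n_1)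
    finally show ?thesis using 2 harm_pred_Suc[OF Suc.hyps] by simp
  next
    case 3
    have "(?h + ?x) ^ k / fact k - 2 * real k ^ 2 * (1 + ?h + ?x) ^ (k - 1) \<le>
          (?h ^ k / fact k - 2 * real k ^ 2 * (1 + ?h) ^ (k - 1)) +
          ?x * (?h ^ (k - 1) / fact (k - 1) - 2 * real (k - 1) ^ 2 * (1 + ?h) ^ (k - 2))"
      using 3 x by (intro power_div_fact_step_ge harm_nonneg) auto
    also have "\<dots> \<le> real (stirling (Suc n) (Suc k)) / fact n"
      unfolding 3 stirling_Suc_Suc_div_fact[OF Suc.hyps]
      using Suc.IH[of "Suc (Suc k')"] Suc.IH[of "Suc k'"] x by (intro add_mono mult_left_mono) auto
    finally show ?thesis using harm_pred_Suc[OF Suc.hyps] by (simp add: add.assoc)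
  qed
qed

lemma ln_le_harm_pred: "n \<ge> 1 \<Longrightarrow> ln (real n) \<le> harm (n - 1)"
  using ln_le_harm[of "n - 1"] by (simp add: of_nat_diff)

lemma harm_le_one_plus_ln: "n \<ge> 1 \<Longrightarrow> harm n \<le> 1 + ln (real n)"
  using euler_mascheroni_sequence_decreasing[of 1 n] by (simp add: harm_def)

lemma ln_squared_le:
  fixes x :: real
  assumes x: "x \<ge> 1"
  shows "ln x ^ 2 \<le> 4 * x"
proof -
  have "ln x = 2 * ln (sqrt x)" using x by (simp add: ln_sqrt)
  also have "\<dots> \<le> 2 * sqrt x" using ln_bound[of "sqrt x"] x by simp
  finally have "ln x ^ 2 \<le> (2 * sqrt x) ^ 2" using x by (intro power_mono) auto
  then show ?thesis using x by (simp add: power_mult_distrib)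
qed

lemma power_div_fact_approx_upper:
  fixes E h L :: real
  assumes L: "L \<ge> 1" "L \<le> h" "h \<le> 1 + L" and E: "E \<le> h ^ k / fact k"
  shows "E * fact k / L ^ k - 1 \<le> real k * 2 ^ k / L"
proof -
  have "E * fact k / L ^ k \<le> (h / L) ^ k"
    using E L by (simp add: field_simps power_divide)
  also have "\<dots> \<le> (1 + 1 / L) ^ k"
    using L by (intro power_mono) (auto simp: field_simps)
  finally have "E * fact k / L ^ k - 1 \<le> (1 + 1 / L) ^ k - 1 ^ k" by simp
  also have "\<dots> \<le> real k * (1 / L) * (1 + 1 / L) ^ (k - 1)"
    using power_diff_le[of 1 "1 + 1 / L" k] L by simp
  also have "(1 + 1 / L) ^ (k - 1) \<le> 2 ^ k"
  proof -
    have "(1 + 1 / L) ^ (k - 1) \<le> 2 ^ (k - 1)" using L by (intro power_mono) (auto simp: field_simps)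
    also have "(2::real) ^ (k - 1) \<le> 2 ^ k" by (intro power_increasing) auto
    finally show ?thesis .
  qed
  then have "real k * (1 / L) * (1 + 1 / L) ^ (k - 1) \<le> real k * (1 / L) * 2 ^ k"
    using L by (intro mult_left_mono) auto
  finally show ?thesis by simp
qed

lemma power_div_fact_approx_lower:
  fixes E h L :: real
  assumes L: "L \<ge> 1" "L \<le> h" "h \<le> 1 + L"
    and E: "h ^ k / fact k - 2 * real k ^ 2 * (1 + h) ^ (k - 1) \<le> E"
  shows "1 - E * fact k / L ^ k \<le> 2 * real k ^ 2 * fact k * 3 ^ k / L"
proof -
  have "1 \<le> (h / L) ^ k" using L by (intro one_le_power) (simp add: field_simps)
  also have "(h / L) ^ k = h ^ k / fact k * fact k / L ^ k" by (simp add: power_divide)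
  finally have main: "1 \<le> h ^ k / fact k * fact k / L ^ k" .
  have error: "2 * real k ^ 2 * (1 + h) ^ (k - 1) * fact k / L ^ k \<le> 2 * real k ^ 2 * fact k * 3 ^ k / L"
  proof (cases "k = 0")
    case False
    have "(1 + h) ^ (k - 1) \<le> (3 * L) ^ (k - 1)" using L by (intro power_mono) auto
    moreover have "L ^ k = L * L ^ (k - 1)" using False by (cases k) auto
    ultimately have "(1 + h) ^ (k - 1) / L ^ k \<le> 3 ^ (k - 1) / L"
      using L by (simp add: field_simps power_mult_distrib)
    also have "\<dots> \<le> 3 ^ k / L" using L by (intro divide_right_mono power_increasing) auto
    finally have "(2 * real k ^ 2 * fact k) * ((1 + h) ^ (k - 1) / L ^ k) \<le> (2 * real k ^ 2 * fact k) * (3 ^ k / L)"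
      by (intro mult_left_mono) auto
    then show ?thesis by (simp add: mult_ac)
  qed simp
  have "(h ^ k / fact k - 2 * real k ^ 2 * (1 + h) ^ (k - 1)) * fact k / L ^ k \<le> E * fact k / L ^ k"
    using E L by (intro divide_right_mono mult_right_mono) auto
  then show ?thesis
    using main error by (simp add: left_diff_distrib diff_divide_distrib)
qed

lemma stirling_relative_error:
  assumes n: "n \<ge> 2" and L: "ln (real n) \<ge> 1"
  shows "\<bar>real (stirling n (Suc k)) * fact k / (fact (n - 1) * ln (real n) ^ k) - 1\<bar>
           \<le> (real k * 2 ^ k + 2 * real k ^ 2 * fact k * 3 ^ k) / ln (real n)"
proof -
  let ?E = "real (stirling n (Suc k)) / fact (n - 1)" and ?h = "harm (n - 1) :: real"
  have "?h \<le> harm n" by (rule harm_mono) simp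
  then have h: "ln (real n) \<le> ?h" "?h \<le> 1 + ln (real n)"
    using n ln_le_harm_pred harm_le_one_plus_ln[of n] by force+
  have "?E * fact k / ln (real n) ^ k - 1 \<le> real k * 2 ^ k / ln (real n)"
    by (rule power_div_fact_approx_upper[OF L h stirling_harm_upper]) (use n in simp)
  moreover have "1 - ?E * fact k / ln (real n) ^ k \<le> 2 * real k ^ 2 * fact k * 3 ^ k / ln (real n)"
    by (rule power_div_fact_approx_lower[OF L h stirling_harm_lower]) (use n in simp)
  moreover have "0 \<le> real k * 2 ^ k / ln (real n)" "0 \<le> 2 * real k ^ 2 * fact k * 3 ^ k / ln (real n)"
    using L by auto
  ultimately show ?thesis
    by (simp add: abs_le_iff add_divide_distrib)
qed

lemma cond_exp_invol_eq:
  assumes "\<theta> > 0"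
  shows "cond_exp_invol \<theta> n m =
           (\<Sum>\<sigma>\<in>{\<sigma>\<in>Sym n. Kcyc n \<sigma> = m}. real (invol n \<sigma>)) / real (stirling n m)"
proof -
  let ?S = "{\<sigma>\<in>Sym n. Kcyc n \<sigma> = m}" and ?c = "\<theta> ^ m / pochhammer \<theta> n"
  have c: "?c \<noteq> 0" using assms pochhammer_pos[OF assms, of n] by simp
  have "ewens \<theta> n \<sigma> = ?c" if "\<sigma> \<in> ?S" for \<sigma>
    using that by (simp add: ewens_def)
  then have "cond_exp_invol \<theta> n m = (?c * (\<Sum>\<sigma>\<in>?S. real (invol n \<sigma>))) / (?c * real (card ?S))"
    unfolding cond_exp_invol_def by (simp add: sum_distrib_left)
  then show ?thesis
    using c assms by (simp add: card_Kcyc_eq_stirling)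
qed

lemma sum_invol_bounds:
  shows "cycles_sum prod_card n m \<le> (\<Sum>\<sigma>\<in>{\<sigma>\<in>Sym n. Kcyc n \<sigma> = m}. real (invol n \<sigma>))"
    and "(\<Sum>\<sigma>\<in>{\<sigma>\<in>Sym n. Kcyc n \<sigma> = m}. real (invol n \<sigma>)) \<le>
           cycles_sum prod_card n m + real m ^ m * cycles_sum sum_prod_card_but_one n m"
  using invol_bounds
  by (auto simp: cycles_sum_def sum_distrib_left simp flip: sum.distrib intro!: sum_mono)

lemma pow_le_fact_mult_choose: "k \<le> a + 1 \<Longrightarrow> (a + 1 - k) ^ k \<le> fact k * (a choose k)"
proof (induction k)
  case (Suc k)
  have "(a + 1 - Suc k) ^ Suc k = (a - k) * (a - k) ^ k" by simp
  also have "\<dots> \<le> (a - k) * (a + 1 - k) ^ k" by (intro mult_le_mono power_mono) auto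
  also have "\<dots> \<le> (a - k) * (fact k * (a choose k))" using Suc by (intro mult_le_mono) auto
  also have "\<dots> = fact k * (Suc k * (a choose Suc k))"
    by (simp only: mult.left_commute Suc_times_choose_Suc)
  also have "\<dots> = fact (Suc k) * (a choose Suc k)" by (simp add: algebra_simps)
  finally show ?case .
qed simp

lemma fact_mult_choose_div_power_bounds:
  assumes "k < n"
  shows "fact k * real ((n - 1) choose k) / real n ^ k \<le> 1"
    and "1 - real k ^ 2 / real n \<le> fact k * real ((n - 1) choose k) / real n ^ k"
proof -
  have "fact k * ((n - 1) choose k) \<le> (n - 1) ^ k"
    using binomial_fact_pow[of "n - 1" k] by (simp add: mult.commute)
  also have "\<dots> \<le> n ^ k" by (intro power_mono) auto
  finally have "fact k * real ((n - 1) choose k) \<le> real n ^ k"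
    by (metis of_nat_fact of_nat_le_iff of_nat_mult of_nat_power)
  then show "fact k * real ((n - 1) choose k) / real n ^ k \<le> 1"
    using assms by (simp add: divide_le_eq)
  have "(n - k) ^ k \<le> fact k * ((n - 1) choose k)"
    using pow_le_fact_mult_choose[of k "n - 1"] assms by simp
  then have low: "real (n - k) ^ k \<le> fact k * real ((n - 1) choose k)"
    by (metis of_nat_fact of_nat_le_iff of_nat_mult of_nat_power)
  have "1 + real k * (- (real k / real n)) \<le> (1 + (- (real k / real n))) ^ k"
    by (rule Bernoulli_inequality) (use assms in simp)
  also have "1 + (- (real k / real n)) = real (n - k) / real n"
    using assms by (simp add: of_nat_diff field_simps)
  also have "(real (n - k) / real n) ^ k \<le> fact k * real ((n - 1) choose k) / real n ^ k"
    using low by (simp add: power_divide divide_right_mono)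
  finally show "1 - real k ^ 2 / real n \<le> fact k * real ((n - 1) choose k) / real n ^ k"
    by (simp add: power2_eq_square)
qed

lemma quotient_relative_error:
  fixes \<alpha> \<beta> \<gamma> a b c :: real
  assumes "1 \<le> \<alpha>" "\<alpha> \<le> 1 + a" "0 \<le> \<beta>" "\<beta> \<le> 1" "1 - b \<le> \<beta>" "\<bar>\<gamma> - 1\<bar> \<le> c" "c \<le> 1/2"
  shows "\<bar>\<alpha> * \<beta> / \<gamma> - 1\<bar> \<le> 2 * (a + b + c)"
proof -
  have \<gamma>: "\<gamma> - 1 \<le> c" "1 - \<gamma> \<le> c" "\<gamma> \<ge> 1/2" using assms(6,7) by (auto simp: abs_le_iff)
  have "(\<alpha> - 1) * \<beta> \<le> (\<alpha> - 1) * 1" using assms(1,4) by (intro mult_left_mono) auto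
  moreover have "0 \<le> (\<alpha> - 1) * \<beta>" using assms(1,3) by simp
  moreover have "\<alpha> * \<beta> - \<gamma> = (\<alpha> - 1) * \<beta> + (\<beta> - 1) + (1 - \<gamma>)" by (simp add: algebra_simps)
  ultimately have num: "\<bar>\<alpha> * \<beta> - \<gamma>\<bar> \<le> a + b + c"
    using assms(2,4,5) \<gamma> by (simp add: abs_le_iff)
  have "\<bar>\<alpha> * \<beta> / \<gamma> - 1\<bar> = \<bar>\<alpha> * \<beta> - \<gamma>\<bar> / \<gamma>" using \<gamma> by (simp add: field_simps)
  also have "\<dots> \<le> (a + b + c) / (1/2)"
    using num \<gamma> by (intro frac_le) auto
  finally show ?thesis by simp
qed

lemma cycles_sum_prod_card_ge:
  assumes m: "m \<ge> 1" and n: "2 * m \<le> n"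
  shows "fact n * (real n / 2) ^ (m - 1) / (fact (m - 1) * fact m) \<le> cycles_sum prod_card n m"
proof -
  let ?k = "m - 1" and ?C = "real ((n - 1) choose (m - 1))"
  have "(n - ?k) ^ ?k \<le> fact ?k * ((n - 1) choose ?k)"
    using pow_le_fact_mult_choose[of ?k "n - 1"] m n by simp
  then have "real (n - ?k) ^ ?k \<le> fact ?k * ?C"
    by (metis of_nat_fact of_nat_le_iff of_nat_mult of_nat_power)
  moreover have "(real n / 2) ^ ?k \<le> real (n - ?k) ^ ?k"
    using m n by (intro power_mono) (auto simp: of_nat_diff)
  ultimately have "fact n * (real n / 2) ^ ?k / (fact ?k * fact m) \<le> fact n * (fact ?k * ?C) / (fact ?k * fact m)"
    by (intro divide_right_mono mult_left_mono) auto
  also have "\<dots> = cycles_sum prod_card n m"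
    using cycles_sum_prod_card_eq[of n m] m n by (simp add: field_simps)
  finally show ?thesis .
qed

lemma cycles_sum_but_one_mult_ln_le:
  assumes n: "n \<ge> 2" and m: "m \<ge> 1" and L: "ln (real n) \<ge> 1"
  shows "cycles_sum sum_prod_card_but_one n m * ln (real n)
           \<le> 12 * real m * 2 ^ (m - 1) * fact n * real n ^ (m - 1)"
proof (cases "m = 1")
  case True
  have "cycles_sum sum_prod_card_but_one n 1 = fact (n - 1)"
    using cycles_sum_but_one_1[of n] n by simp
  then have "cycles_sum sum_prod_card_but_one n 1 * ln (real n) \<le> fact (n - 1) * real n"
    using ln_bound[of "real n"] n by (simp add: mult_left_mono)
  also have "\<dots> = fact n" using n by (cases n) auto
  also have "\<dots> \<le> 12 * fact n" by simp
  finally show ?thesis using True by simp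
next
  case False
  let ?L = "ln (real n)" and ?V = "cycles_sum sum_prod_card_but_one n m"
  have "?V \<le> real m * fact n * real (n + 1) ^ (m - 2) * (1 + harm n)"
    using False m by (intro cycles_sum_but_one_le) auto
  also have "\<dots> \<le> real m * fact n * (2 * real n) ^ (m - 2) * (3 * ?L)"
  proof (intro mult_mono mult_left_mono)
    show "real (n + 1) ^ (m - 2) \<le> (2 * real n) ^ (m - 2)" using n by (intro power_mono) auto
    show "1 + harm n \<le> 3 * ?L" using harm_le_one_plus_ln[of n] n L by simp
  qed (use L harm_nonneg[of n, where 'a=real] in auto)
  finally have "?V * ?L \<le> real m * fact n * (2 * real n) ^ (m - 2) * (3 * ?L) * ?L"
    using L by (intro mult_right_mono) auto
  also have "\<dots> = 3 * real m * fact n * (2 * real n) ^ (m - 2) * ?L ^ 2"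
    by (simp add: power2_eq_square)
  also have "\<dots> \<le> 3 * real m * fact n * (2 * real n) ^ (m - 2) * (4 * real n)"
    using ln_squared_le[of "real n"] n by (intro mult_left_mono) auto
  also have "\<dots> = 12 * real m * 2 ^ (m - 2) * fact n * real n ^ (m - 1)"
  proof -
    have "m - 1 = Suc (m - 2)" using False m by simp
    then show ?thesis by (simp add: power_mult_distrib algebra_simps)
  qed
  also have "\<dots> \<le> 12 * real m * 2 ^ (m - 1) * fact n * real n ^ (m - 1)"
    by (intro mult_right_mono mult_left_mono power_increasing) auto
  finally show ?thesis .
qed

lemma cycles_sum_but_one_le_cycles_sum_prod_card:
  assumes m: "m \<ge> 1" and n: "2 * m \<le> n" and L: "ln (real n) \<ge> 1"
  shows "cycles_sum sum_prod_card_but_one n m * ln (real n)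
           \<le> 12 * real m * fact (m - 1) * fact m * 4 ^ (m - 1) * cycles_sum prod_card n m"
proof -
  let ?k = "m - 1" and ?c = "12 * real m * fact (m - 1) * fact m * 4 ^ (m - 1)"
  have "cycles_sum sum_prod_card_but_one n m * ln (real n) \<le> 12 * real m * 2 ^ ?k * fact n * real n ^ ?k"
    using m n L by (intro cycles_sum_but_one_mult_ln_le) auto
  also have "\<dots> = ?c * (fact n * (real n / 2) ^ ?k / (fact ?k * fact m))"
  proof -
    define X where "X = (real n / 2) ^ ?k"
    have "X * 4 ^ ?k = (real n / 2 * 4) ^ ?k" unfolding X_def by (rule power_mult_distrib[symmetric])
    also have "\<dots> = 2 ^ ?k * real n ^ ?k" by (simp add: power_mult_distrib)
    finally have X: "X * 4 ^ ?k = 2 ^ ?k * real n ^ ?k" .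
    have "?c * (fact n * X / (fact ?k * fact m)) = 12 * real m * fact n * (X * 4 ^ ?k)"
      by (simp add: field_simps)
    also have "\<dots> = 12 * real m * 2 ^ ?k * fact n * real n ^ ?k"
      unfolding X by (simp add: mult_ac)
    finally show ?thesis unfolding X_def by (rule sym)
  qed
  also have "\<dots> \<le> ?c * cycles_sum prod_card n m"
    using cycles_sum_prod_card_ge[OF m n] by (intro mult_left_mono) auto
  finally show ?thesis .
qed

lemma sum_invol_div_cycles_sum_prod_card_bounds:
  assumes m: "m \<ge> 1" and n: "2 * m \<le> n" and L: "ln (real n) \<ge> 1"
  defines "A \<equiv> (\<Sum>\<sigma>\<in>{\<sigma>\<in>Sym n. Kcyc n \<sigma> = m}. real (invol n \<sigma>))"
    and "D \<equiv> cycles_sum prod_card n m"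
  shows "1 \<le> A / D"
    and "A / D \<le> 1 + real m ^ m * (12 * real m * fact (m - 1) * fact m * 4 ^ (m - 1)) / ln (real n)"
proof -
  let ?cv = "12 * real m * fact (m - 1) * fact m * 4 ^ (m - 1)" and ?L = "ln (real n)"
  have D0: "D > 0" using cycles_sum_prod_card_pos[of m n] m n by (simp add: D_def)
  show "1 \<le> A / D" using sum_invol_bounds(1)[of n m] D0 by (simp add: A_def D_def)
  have L0: "?L > 0" using L by simp
  have "cycles_sum sum_prod_card_but_one n m \<le> ?cv / ?L * D"
    using cycles_sum_but_one_le_cycles_sum_prod_card[OF m n L] L0 by (simp add: D_def field_simps)
  then have "A \<le> D + real m ^ m * (?cv / ?L * D)"
    using sum_invol_bounds(2)[of n m] unfolding A_def D_def
    by (meson add_left_mono mult_left_mono order_trans zero_le_power of_nat_0_le_iff)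
  then have "A / D \<le> (D + real m ^ m * (?cv / ?L * D)) / D"
    by (rule divide_right_mono) (use D0 in simp)
  also have "\<dots> = 1 + real m ^ m * ?cv / ?L"
    using D0 by (simp add: field_simps)
  finally show "A / D \<le> 1 + real m ^ m * ?cv / ?L" .
qed

text \<open>The normalised expectation splits into three factors that tend to \<open>1\<close>: the sum of \<open>invol\<close>
  over its main term (the Lah number), the Lah number over \<open>n!/m! * n^k/k!\<close>, and \<open>stirling n m\<close>
  over \<open>(n-1)! * L^k/k!\<close>.\<close>

lemma cond_exp_invol_normalised_eq:
  fixes \<theta> L :: real
  assumes \<theta>: "\<theta> > 0" and mk: "m = Suc k" and kn: "k < n" and L: "L \<noteq> 0"
    and S: "stirling n m \<noteq> 0"
  shows "cond_exp_invol \<theta> n m / (real n ^ m / (fact m * L ^ k)) =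
           (\<Sum>\<sigma>\<in>{\<sigma>\<in>Sym n. Kcyc n \<sigma> = m}. real (invol n \<sigma>)) / cycles_sum prod_card n m *
           (fact k * real ((n - 1) choose k) / real n ^ k) /
           (real (stirling n m) * fact k / (fact (n - 1) * L ^ k))"
proof -
  have "fact m * cycles_sum prod_card n m = fact n * real ((n - 1) choose k)"
    using cycles_sum_prod_card_eq[of n m] mk kn by simp
  then have D: "cycles_sum prod_card n m = fact n * real ((n - 1) choose k) / fact m"
    by (simp add: field_simps)
  have "(n - 1) choose k \<noteq> 0" using kn by simp
  moreover have "fact n = real n * fact (n - 1)" using kn by (simp add: fact_reduce)
  moreover have "real n ^ m = real n * real n ^ k" by (simp add: mk)
  ultimately show ?thesis
    unfolding cond_exp_invol_eq[OF \<theta>] D using kn L S by (simp add: field_simps)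
qed

lemma cond_exp_invol_relative_error:
  fixes \<theta> :: real and m n :: nat
  defines "cg \<equiv> real (m - 1) * 2 ^ (m - 1) + 2 * real (m - 1) ^ 2 * fact (m - 1) * 3 ^ (m - 1)"
    and "cv \<equiv> 12 * real m * fact (m - 1) * fact m * 4 ^ (m - 1)"
  assumes \<theta>: "\<theta> > 0" and m: "m \<ge> 1" and n: "2 * m \<le> n"
    and L: "ln (real n) \<ge> 1" "ln (real n) \<ge> 2 * cg"
  shows "\<bar>cond_exp_invol \<theta> n m / (real n ^ m / (fact m * ln (real n) ^ (m - 1))) - 1\<bar>
           \<le> 2 * (real m ^ m * cv + real (m - 1) ^ 2 + cg) / ln (real n)"
proof -
  obtain k where mk: "m = Suc k" using m by (cases m) auto
  define L where "L = ln (real n)"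
  have kn: "k < n" using n mk by simp
  have L0: "L > 0" using L unfolding L_def by simp
  then have "L \<noteq> 0" by simp
  define \<gamma> where "\<gamma> = real (stirling n m) * fact k / (fact (n - 1) * L ^ k)"
  have \<gamma>: "\<bar>\<gamma> - 1\<bar> \<le> cg / L"
    using stirling_relative_error[of n k] L(1) n by (simp add: \<gamma>_def cg_def L_def mk)
  have cg: "cg / L \<le> 1/2" using L(2) L0 by (simp add: L_def field_simps)
  have "\<gamma> \<noteq> 0" using \<gamma> cg unfolding abs_le_iff by linarith
  then have "stirling n m \<noteq> 0" by (auto simp: \<gamma>_def)
  have \<beta>: "0 \<le> fact k * real ((n - 1) choose k) / real n ^ k"
    "fact k * real ((n - 1) choose k) / real n ^ k \<le> 1"
    "1 - real k ^ 2 / L \<le> fact k * real ((n - 1) choose k) / real n ^ k"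
  proof -
    have "real k ^ 2 / real n \<le> real k ^ 2 / L"
      using ln_bound[of "real n"] L0 kn by (intro divide_left_mono) (auto simp: L_def)
    then show "1 - real k ^ 2 / L \<le> fact k * real ((n - 1) choose k) / real n ^ k"
      using fact_mult_choose_div_power_bounds(2)[OF kn] by simp
  qed (use fact_mult_choose_div_power_bounds(1)[OF kn] in simp_all)
  have "\<bar>cond_exp_invol \<theta> n m / (real n ^ m / (fact m * L ^ k)) - 1\<bar>
          \<le> 2 * (real m ^ m * cv / L + real k ^ 2 / L + cg / L)"
    unfolding cond_exp_invol_normalised_eq[OF \<theta> mk kn \<open>L \<noteq> 0\<close> \<open>stirling n m \<noteq> 0\<close>] \<gamma>_def[symmetric]
    using sum_invol_div_cycles_sum_prod_card_bounds[OF m n L(1)] \<beta> \<gamma> cg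
    by (intro quotient_relative_error) (simp_all add: cv_def L_def)
  then show ?thesis
    using L0 by (simp add: L_def mk add_divide_distrib)
qed

theorem theorem2p2:
  fixes \<theta> :: real and m :: nat
  assumes "\<theta> > 0" and "m \<ge> 1"
  shows "(\<lambda>n. cond_exp_invol \<theta> n m /
            (real n ^ m / (fact m * ln (real n) ^ (m - 1))) - 1)
         \<in> O(\<lambda>n. 1 / ln (real n))"
proof -
  define cg where "cg = real (m - 1) * 2 ^ (m - 1) + 2 * real (m - 1) ^ 2 * fact (m - 1) * 3 ^ (m - 1)"
  define cv where "cv = 12 * real m * fact (m - 1) * fact m * 4 ^ (m - 1)"
  have "filterlim (\<lambda>n::nat. ln (real n)) at_top at_top"
    using filterlim_compose[OF ln_at_top filterlim_real_sequentially] by (simp add: o_def)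
  then have "eventually (\<lambda>n::nat. ln (real n) \<ge> 1) at_top" "eventually (\<lambda>n::nat. ln (real n) \<ge> 2 * cg) at_top"
    unfolding filterlim_at_top by blast+
  then have "eventually (\<lambda>n::nat. 2 * m \<le> n \<and> ln (real n) \<ge> 1 \<and> ln (real n) \<ge> 2 * cg) at_top"
    using eventually_ge_at_top[of "2 * m"] by eventually_elim auto
  then have "eventually (\<lambda>n. norm (cond_exp_invol \<theta> n m / (real n ^ m / (fact m * ln (real n) ^ (m - 1))) - 1)
              \<le> 2 * (real m ^ m * cv + real (m - 1) ^ 2 + cg) * norm (1 / ln (real n))) at_top"
    by eventually_elim
      (use cond_exp_invol_relative_error[OF assms] in \<open>auto simp: cg_def cv_def\<close>)
  then show ?thesis by (rule bigoI)
qed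

end
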